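(* Let $T$ be a tree with at least two vertices. Then $\dim(T)=\mathrm{adim}(T)$ if and only if one of the following holds: - $T\in\{P_2,P_3\}$; or - for some integer $x\ge3$, $T$ is obtained from the star $K_{1,x}$ by subdividing at most $x-1$ of its edges, each exactly once.
   Context: $d(x,y)$ denotes graph distance. A set $S\subseteq V(G)$ is a resolving set if for all distinct $x,y$ there is $z\in S$ with $d(x,z)\ne d(y,z)$. $\dim(G)$ is the minimum size of a resolving set. Let $d_1(x,y)=\min\{d(x,y),2\}$. A set $A\subseteq V(G)$ is an adjacency resolving set if for all distinct $x,y\in V(G)$ there is $z\in A$ with $d_1(x,z)\ne d_1(y,z)$. $\mathrm{adim}(G)$ is the minimum size of an adjacency resolving set. *)

theory Defs
  imports Main
begin

definition simple_graph :: "'a set \<Rightarrow> ('a \<Rightarrow> 'a \<Rightarrow> bool) \<Rightarrow> bool" where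
  "simple_graph V E \<longleftrightarrow> finite V \<and> (\<forall>x y. E x y \<longrightarrow> x \<in> V \<and> y \<in> V)
     \<and> (\<forall>x y. E x y \<longrightarrow> E y x) \<and> (\<forall>x. \<not> E x x)"

definition walk :: "('a \<Rightarrow> 'a \<Rightarrow> bool) \<Rightarrow> 'a list \<Rightarrow> bool" where
  "walk E xs \<longleftrightarrow> xs \<noteq> [] \<and> (\<forall>i < length xs - 1. E (xs ! i) (xs ! (i + 1)))"

definition connected_graph :: "'a set \<Rightarrow> ('a \<Rightarrow> 'a \<Rightarrow> bool) \<Rightarrow> bool" where
  "connected_graph V E \<longleftrightarrow>
     (\<forall>x\<in>V. \<forall>y\<in>V. \<exists>xs. walk E xs \<and> hd xs = x \<and> last xs = y)"

definition has_cycle :: "('a \<Rightarrow> 'a \<Rightarrow> bool) \<Rightarrow> bool" where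
  "has_cycle E \<longleftrightarrow> (\<exists>xs. length xs \<ge> 3 \<and> distinct xs \<and> walk E xs \<and> E (last xs) (hd xs))"

definition tree :: "'a set \<Rightarrow> ('a \<Rightarrow> 'a \<Rightarrow> bool) \<Rightarrow> bool" where
  "tree V E \<longleftrightarrow> simple_graph V E \<and> V \<noteq> {} \<and> connected_graph V E \<and> \<not> has_cycle E"

definition gdist :: "('a \<Rightarrow> 'a \<Rightarrow> bool) \<Rightarrow> 'a \<Rightarrow> 'a \<Rightarrow> nat" where
  "gdist E x y = (LEAST n. \<exists>xs. walk E xs \<and> hd xs = x \<and> last xs = y \<and> length xs = n + 1)"

definition resolving_set :: "'a set \<Rightarrow> ('a \<Rightarrow> 'a \<Rightarrow> bool) \<Rightarrow> 'a set \<Rightarrow> bool" where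
  "resolving_set V E S \<longleftrightarrow> S \<subseteq> V \<and>
     (\<forall>x\<in>V. \<forall>y\<in>V. x \<noteq> y \<longrightarrow> (\<exists>z\<in>S. gdist E x z \<noteq> gdist E y z))"

definition metric_dim :: "'a set \<Rightarrow> ('a \<Rightarrow> 'a \<Rightarrow> bool) \<Rightarrow> nat" where
  "metric_dim V E = Min {card S | S. resolving_set V E S}"

definition adist :: "('a \<Rightarrow> 'a \<Rightarrow> bool) \<Rightarrow> 'a \<Rightarrow> 'a \<Rightarrow> nat" where
  "adist E x y = min (gdist E x y) 2"

definition adj_resolving_set :: "'a set \<Rightarrow> ('a \<Rightarrow> 'a \<Rightarrow> bool) \<Rightarrow> 'a set \<Rightarrow> bool" where
  "adj_resolving_set V E A \<longleftrightarrow> A \<subseteq> V \<and>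
     (\<forall>x\<in>V. \<forall>y\<in>V. x \<noteq> y \<longrightarrow> (\<exists>z\<in>A. adist E x z \<noteq> adist E y z))"

definition adj_dim :: "'a set \<Rightarrow> ('a \<Rightarrow> 'a \<Rightarrow> bool) \<Rightarrow> nat" where
  "adj_dim V E = Min {card A | A. adj_resolving_set V E A}"

definition graph_iso :: "'a set \<Rightarrow> ('a \<Rightarrow> 'a \<Rightarrow> bool) \<Rightarrow> 'b set \<Rightarrow> ('b \<Rightarrow> 'b \<Rightarrow> bool) \<Rightarrow> bool" where
  "graph_iso V E W F \<longleftrightarrow> (\<exists>f. bij_betw f V W \<and> (\<forall>x\<in>V. \<forall>y\<in>V. E x y \<longleftrightarrow> F (f x) (f y)))"

definition path_V :: "nat \<Rightarrow> nat set" where "path_V n = {0..<n}"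
definition path_E :: "nat \<Rightarrow> nat \<Rightarrow> nat \<Rightarrow> bool" where
  "path_E n u v \<longleftrightarrow> u < n \<and> v < n \<and> (u + 1 = v \<or> v + 1 = u)"

text \<open>Star K_{1,x} (centre 0, leaves 1..x) with the edges to leaves 1..k subdivided once:
  subdivision vertex x+i sits between centre 0 and leaf i (1 \<le> i \<le> k).\<close>
definition spider_V :: "nat \<Rightarrow> nat \<Rightarrow> nat set" where "spider_V x k = {0..x+k}"
definition spider_E0 :: "nat \<Rightarrow> nat \<Rightarrow> nat \<Rightarrow> nat \<Rightarrow> bool" where
  "spider_E0 x k u v \<longleftrightarrow> (u = 0 \<and> k < v \<and> v \<le> x) \<or> (u = 0 \<and> x < v \<and> v \<le> x + k)
     \<or> (1 \<le> u \<and> u \<le> k \<and> v = x + u)"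
definition spider_E :: "nat \<Rightarrow> nat \<Rightarrow> nat \<Rightarrow> nat \<Rightarrow> bool" where
  "spider_E x k u v \<longleftrightarrow> spider_E0 x k u v \<or> spider_E0 x k v u"

end

theory Submission
  imports Defs
begin

text \<open>
  In a tree, a nonempty set \<open>S\<close> of vertices is resolving iff no vertex \<open>m\<close> has two
  neighbours whose branches (components of the tree minus \<open>m\<close>) both miss \<open>S\<close>; hence
  \<open>dim\<close> is at least the maximum degree minus one.

  Now let \<open>A\<close> be a minimum adjacency resolving set with \<open>dim = adim\<close>. No element \<open>a\<close> of \<open>A\<close>
  can be dropped, so \<open>a\<close> is the only element of \<open>A\<close> in a branch at some vertex \<open>m\<close> which
  has a second branch free of \<open>A\<close>. If the tree has a vertex of degree at least 3, \<open>m\<close> can be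
  chosen outside \<open>A\<close>; the free branch is then a single leaf at distance 2 from all of \<open>A\<close>,
  so it is the same leaf for all \<open>a\<close>, and all the \<open>m\<close> are one centre \<open>c\<close>. Every other
  branch at \<open>c\<close> is resolved by a single element of \<open>A\<close> with adjacency distances 0 and 1
  only, so it has at most two vertices: the tree is a star with some edges subdivided once
  and at least one edge not. Conversely, in such a spider with \<open>x\<close> legs the subdivision
  vertices together with all but one of the unsubdivided leaves form an adjacency resolving
  set of size \<open>x - 1\<close>. A tree without vertices of degree 3 is a path, resolved by a leaf,
  while \<open>adim \<ge> 2\<close> as soon as there are at least four vertices.
\<close>

section \<open>Distances in trees\<close>

lemma walk_iff_successively: "walk E xs \<longleftrightarrow> xs \<noteq> [] \<and> successively E xs"
  unfolding walk_def successively_conv_nth by (auto simp: less_diff_conv)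

lemma walk_take: "walk E xs \<Longrightarrow> 0 < n \<Longrightarrow> walk E (take n xs)"
  using successively_append_iff[of E "take n xs" "drop n xs"]
  by (auto simp: walk_iff_successively)

lemma walk_drop: "walk E xs \<Longrightarrow> n < length xs \<Longrightarrow> walk E (drop n xs)"
  using successively_append_iff[of E "take n xs" "drop n xs"]
  by (auto simp: walk_iff_successively)

lemma walk_Cons: "walk E xs \<Longrightarrow> E x (hd xs) \<Longrightarrow> walk E (x # xs)"
  by (simp add: walk_iff_successively successively_Cons)

lemma walk_snoc: "walk E xs \<Longrightarrow> E (last xs) y \<Longrightarrow> walk E (xs @ [y])"
  by (simp add: walk_iff_successively successively_append_iff)

locale tree_graph =
  fixes V :: "'a set" and E :: "'a \<Rightarrow> 'a \<Rightarrow> bool"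
  assumes tree: "tree V E"
begin

abbreviation d :: "'a \<Rightarrow> 'a \<Rightarrow> nat" where "d \<equiv> gdist E"

lemma finite_V: "finite V"
  using tree unfolding tree_def simple_graph_def by auto

lemma V_nonempty: "V \<noteq> {}"
  using tree unfolding tree_def by auto

lemma edge_in_V: assumes "E x y" shows "x \<in> V" "y \<in> V"
  using tree assms unfolding tree_def simple_graph_def by auto

lemma edge_sym: "E x y \<Longrightarrow> E y x"
  using tree unfolding tree_def simple_graph_def by auto

lemma no_loop: "\<not> E x x"
  using tree unfolding tree_def simple_graph_def by auto

lemma edge_neq: "E x y \<Longrightarrow> x \<noteq> y"
  using no_loop by auto

lemma no_cycle: "\<not> has_cycle E"
  using tree unfolding tree_def by auto

lemma walk_in_V: "walk E xs \<Longrightarrow> hd xs \<in> V \<Longrightarrow> set xs \<subseteq> V"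
  by (induction xs rule: induct_list012)
     (auto simp: walk_iff_successively dest: edge_in_V)

lemma shortest_walk:
  assumes "x \<in> V" "y \<in> V"
  obtains xs where "walk E xs" "hd xs = x" "last xs = y" "length xs = d x y + 1"
proof -
  from tree assms obtain xs where "walk E xs" "hd xs = x" "last xs = y"
    unfolding tree_def connected_graph_def by blast
  moreover have "length xs = (length xs - 1) + 1"
    using \<open>walk E xs\<close> unfolding walk_def by auto
  ultimately have "\<exists>n xs. walk E xs \<and> hd xs = x \<and> last xs = y \<and> length xs = n + 1"
    by blast
  then have "\<exists>xs. walk E xs \<and> hd xs = x \<and> last xs = y \<and> length xs = d x y + 1"
    unfolding gdist_def by (rule LeastI_ex)
  with that show ?thesis by blast
qed

lemma dist_le_walk:
  assumes "walk E xs" "hd xs = x" "last xs = y"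
  shows "d x y \<le> length xs - 1"
proof -
  have "length xs = (length xs - 1) + 1"
    using assms unfolding walk_def by auto
  then show ?thesis
    unfolding gdist_def using assms by (intro Least_le) blast
qed

lemma dist_self [simp]: "d x x = 0"
  using dist_le_walk[of "[x]"] by (auto simp: walk_def)

lemma dist_eq_0_iff:
  assumes "x \<in> V" "y \<in> V"
  shows "d x y = 0 \<longleftrightarrow> x = y"
proof
  assume "d x y = 0"
  then obtain xs where "hd xs = x" "last xs = y" "length xs = 1"
    using shortest_walk[OF assms] by auto
  then show "x = y" by (cases xs) auto
qed simp

lemma dist_via_neighbour:
  assumes "E x p" "y \<in> V"
  shows "d x y \<le> d p y + 1"
proof -
  obtain xs where xs: "walk E xs" "hd xs = p" "last xs = y" "length xs = d p y + 1"
    using shortest_walk[OF edge_in_V(2)[OF assms(1)] assms(2)] .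
  then have "walk E (x # xs)"
    using assms(1) by (auto simp: walk_iff_successively successively_Cons)
  from dist_le_walk[OF this] xs show ?thesis by (cases xs) auto
qed

lemma closer_neighbour:
  assumes "x \<in> V" "y \<in> V" "x \<noteq> y"
  obtains p where "E x p" "d p y + 1 = d x y"
proof -
  obtain xs where xs: "walk E xs" "hd xs = x" "last xs = y" "length xs = d x y + 1"
    using shortest_walk[OF assms(1,2)] .
  have "d x y \<noteq> 0" using dist_eq_0_iff assms by auto
  then obtain b ys where xsd: "xs = x # b # ys"
    using xs by (cases xs; cases "tl xs") auto
  have xb: "E x b" and "walk E (b # ys)"
    using xs(1) unfolding xsd by (auto simp: walk_iff_successively)
  then have "d b y \<le> length ys"
    using dist_le_walk[of "b # ys"] xs xsd by auto
  moreover have "d x y \<le> d b y + 1"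
    using dist_via_neighbour[OF xb assms(2)] .
  ultimately have "d b y + 1 = d x y"
    using xs xsd by auto
  with xb show ?thesis by (rule that)
qed

lemma dist_triangle:
  assumes "x \<in> V" "y \<in> V" "z \<in> V"
  shows "d x z \<le> d x y + d y z"
  using assms(1)
proof (induction "d x y" arbitrary: x)
  case 0 then show ?case using dist_eq_0_iff assms by auto
next
  case (Suc n)
  then have "x \<noteq> y" by auto
  then obtain p where p: "E x p" "d p y + 1 = d x y"
    using closer_neighbour Suc.prems assms(2) by blast
  have "d p z \<le> d p y + d y z"
    using Suc p edge_in_V(2)[OF p(1)] by auto
  moreover have "d x z \<le> d p z + 1"
    using dist_via_neighbour[OF p(1) assms(3)] .
  ultimately show ?case using p by auto
qed

lemma dist_edge:
  assumes "E x y"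
  shows "d x y = 1"
proof -
  have "d x y \<le> 1"
    using dist_via_neighbour[OF assms edge_in_V(2)[OF assms]] by simp
  moreover have "d x y \<noteq> 0"
    using dist_eq_0_iff edge_in_V assms edge_neq by blast
  ultimately show ?thesis by simp
qed

lemma dist_eq_1_iff:
  assumes "x \<in> V" "y \<in> V"
  shows "d x y = 1 \<longleftrightarrow> E x y"
proof
  assume d1: "d x y = 1"
  then have "x \<noteq> y" by auto
  then obtain p where "E x p" "d p y = 0"
    using closer_neighbour[OF assms] d1 by auto
  then show "E x y" using dist_eq_0_iff edge_in_V(2) assms(2) by blast
qed (rule dist_edge)

lemma dist_commute:
  assumes "x \<in> V" "y \<in> V"
  shows "d x y = d y x"
proof -
  have le: "d a b \<le> d b a" if "a \<in> V" "b \<in> V" for a b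
    using that
  proof (induction "d b a" arbitrary: b)
    case 0 then show ?case using dist_eq_0_iff by auto
  next
    case (Suc n)
    then have "b \<noteq> a" by auto
    then obtain q where q: "E b q" "d q a + 1 = d b a"
      using closer_neighbour Suc.prems by blast
    have "d a q \<le> d q a"
      using Suc q edge_in_V(2)[OF q(1)] by auto
    moreover have "d a b \<le> d a q + d q b"
      using dist_triangle Suc edge_in_V(2)[OF q(1)] by auto
    ultimately show ?case
      using q dist_edge[OF edge_sym[OF q(1)]] by auto
  qed
  show ?thesis using le[OF assms] le[OF assms(2,1)] by simp
qed

text \<open>Read off a shortest walk: its prefixes and suffixes are walks as well, so the
  triangle inequality is tight at each of its vertices.\<close>

lemma geodesic:
  assumes "x \<in> V" "y \<in> V"
  obtains P where "P 0 = x" "P (d x y) = y" "\<forall>i<d x y. E (P i) (P (Suc i))"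
    "\<forall>i\<le>d x y. P i \<in> V \<and> d x (P i) = i \<and> d (P i) y = d x y - i"
proof -
  obtain xs where xs: "walk E xs" "hd xs = x" "last xs = y" "length xs = d x y + 1"
    using shortest_walk[OF assms] .
  have P0: "xs ! 0 = x" using xs by (cases xs) auto
  have "xs \<noteq> []" using xs(4) by auto
  then have Pn: "xs ! d x y = y" using xs(3,4) last_conv_nth[of xs] by simp
  have edges: "\<forall>i<d x y. E (xs ! i) (xs ! Suc i)"
    using xs(1,4) unfolding walk_def by simp
  have inV: "xs ! i \<in> V" if "i \<le> d x y" for i
  proof -
    have "xs ! i \<in> set xs" using xs(4) that by simp
    moreover have "set xs \<subseteq> V" using walk_in_V[OF xs(1)] xs(2) assms(1) by simp
    ultimately show ?thesis by blast
  qed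
  have "d x (xs ! i) = i \<and> d (xs ! i) y = d x y - i" if i: "i \<le> d x y" for i
  proof -
    have "last (take (Suc i) xs) = xs ! i"
      using i xs(4) by (simp add: take_Suc_conv_app_nth)
    then have "d x (xs ! i) \<le> length (take (Suc i) xs) - 1"
      using xs(2) by (intro dist_le_walk walk_take xs(1)) auto
    then have "d x (xs ! i) \<le> i"
      using i xs(4) by simp
    moreover have "d (xs ! i) y \<le> d x y - i"
      using dist_le_walk[OF walk_drop[OF xs(1), of i], of "xs ! i" y] xs i
      by (simp add: hd_drop_conv_nth)
    moreover have "d x y \<le> d x (xs ! i) + d (xs ! i) y"
      using dist_triangle[OF assms(1) inV[OF i] assms(2)] .
    ultimately show ?thesis using i by linarith
  qed
  with P0 Pn edges inV show ?thesis
    by (intro that[of "(!) xs"]) auto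
qed

text \<open>Two paths leaving a common vertex and climbing one level per step, joined at level
  \<open>k\<close> by a bridge above level \<open>k\<close>: going back down both paths to the last common vertex
  closes a cycle.\<close>

lemma level_paths_close_cycle:
  fixes lvl :: "'a \<Rightarrow> nat"
  assumes "P 0 = Q 0" "\<forall>i<k. E (P i) (P (Suc i)) \<and> E (Q i) (Q (Suc i))"
    "\<forall>i\<le>k. lvl (P i) = i \<and> lvl (Q i) = i" "P k \<noteq> Q k"
    "walk E (P k # bs @ [Q k])" "distinct bs" "\<forall>b\<in>set bs. k < lvl b"
  shows "has_cycle E"
  using assms(2-)
proof (induction k arbitrary: bs)
  case 0 then show ?case using assms(1) by simp
next
  case (Suc k)
  have lvl: "lvl (P k) = k" "lvl (Q k) = k" "lvl (P (Suc k)) = Suc k" "lvl (Q (Suc k)) = Suc k"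
    using Suc.prems(2) by auto
  have down: "E (P k) (P (Suc k))" "E (Q (Suc k)) (Q k)"
    using Suc.prems(1) edge_sym by auto
  show ?case
  proof (cases "P k = Q k")
    case True
    let ?cyc = "P k # P (Suc k) # bs @ [Q (Suc k)]"
    have "distinct ?cyc"
      using Suc.prems(3,5,6) lvl by force
    moreover have "walk E ?cyc"
      using Suc.prems(4) down by (auto simp: walk_iff_successively)
    ultimately show ?thesis
      unfolding has_cycle_def using down True by (intro exI[of _ ?cyc]) auto
  next
    case False
    let ?bs = "P (Suc k) # bs @ [Q (Suc k)]"
    have "walk E (P k # ?bs @ [Q k])"
      using walk_Cons[OF walk_snoc[OF Suc.prems(4)]] down by simp
    moreover have "distinct ?bs" "\<forall>b\<in>set ?bs. k < lvl b"
      using Suc.prems(3,5,6) lvl by force+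
    ultimately show ?thesis
      using Suc.prems(1,2) False by (intro Suc.IH[of ?bs]) auto
  qed
qed

lemma adjacent_dist_neq:
  assumes "E u m" "z \<in> V"
  shows "d z u \<noteq> d z m"
proof
  assume eq: "d z u = d z m"
  obtain P where P: "P 0 = z" "P (d z u) = u" "\<forall>i<d z u. E (P i) (P (Suc i))"
    "\<forall>i\<le>d z u. d z (P i) = i"
    using geodesic[OF assms(2) edge_in_V(1)[OF assms(1)]] by metis
  obtain Q where Q: "Q 0 = z" "Q (d z u) = m" "\<forall>i<d z u. E (Q i) (Q (Suc i))"
    "\<forall>i\<le>d z u. d z (Q i) = i"
    using geodesic[OF assms(2) edge_in_V(2)[OF assms(1)]] eq by metis
  have "has_cycle E"
    by (rule level_paths_close_cycle[of P Q "d z u" "d z" "[]"])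
       (use P Q assms edge_neq in \<open>auto simp: walk_iff_successively\<close>)
  then show False using no_cycle by simp
qed

lemma adjacent_dist_diff:
  assumes "E u m" "z \<in> V"
  shows "d z u = d z m + 1 \<or> d z m = d z u + 1"
proof -
  have "d z u \<le> d z m + d m u" "d z m \<le> d z u + d u m"
    using dist_triangle assms edge_in_V by auto
  moreover have "d m u = 1" "d u m = 1"
    using dist_edge assms edge_sym by auto
  ultimately show ?thesis using adjacent_dist_neq[OF assms] by auto
qed

lemma unique_closer_neighbour:
  assumes "E m u" "E m w" "z \<in> V" "d z u < d z m" "d z w < d z m"
  shows "u = w"
proof (rule ccontr)
  assume uw: "u \<noteq> w"
  have dm: "d z m = d z u + 1" "d z m = d z w + 1"
    using adjacent_dist_diff[OF edge_sym[OF assms(1)] assms(3)]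
      adjacent_dist_diff[OF edge_sym[OF assms(2)] assms(3)] assms(4,5) by auto
  obtain P where P: "P 0 = z" "P (d z u) = u" "\<forall>i<d z u. E (P i) (P (Suc i))"
    "\<forall>i\<le>d z u. d z (P i) = i"
    using geodesic[OF assms(3) edge_in_V(2)[OF assms(1)]] by metis
  obtain Q where Q: "Q 0 = z" "Q (d z u) = w" "\<forall>i<d z u. E (Q i) (Q (Suc i))"
    "\<forall>i\<le>d z u. d z (Q i) = i"
    using geodesic[OF assms(3) edge_in_V(2)[OF assms(2)]] dm by (metis add_right_cancel)
  have "has_cycle E"
    by (rule level_paths_close_cycle[of P Q "d z u" "d z" "[m]"])
       (use P Q assms uw dm edge_sym in \<open>auto simp: walk_iff_successively\<close>)
  then show False using no_cycle by simp
qed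

lemma dist_parity:
  assumes "x \<in> V" "y \<in> V" "s \<in> V"
  shows "even (d x s + d y s + d x y)"
  using assms(1)
proof (induction "d x y" arbitrary: x)
  case 0 then show ?case using dist_eq_0_iff assms by auto
next
  case (Suc n)
  then have "x \<noteq> y" by auto
  then obtain p where p: "E x p" "d p y + 1 = d x y"
    using closer_neighbour Suc.prems assms(2) by blast
  have "even (d p s + d y s + d p y)"
    using Suc p edge_in_V(2)[OF p(1)] by auto
  moreover have "d x s = d p s + 1 \<or> d p s = d x s + 1"
    using adjacent_dist_diff[OF p(1) assms(3)] dist_commute assms(3) Suc.prems
      edge_in_V(2)[OF p(1)] by metis
  ultimately show ?case using p(2) by presburger
qed

section \<open>Branches\<close>

text \<open>For a neighbour \<open>u\<close> of \<open>m\<close>, \<open>branch m u\<close> is the component of the tree minus \<open>m\<close>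
  that contains \<open>u\<close>.\<close>

definition branch :: "'a \<Rightarrow> 'a \<Rightarrow> 'a set" where
  "branch m u = {z \<in> V. d z u < d z m}"

lemma branch_in_V: "z \<in> branch m u \<Longrightarrow> z \<in> V"
  unfolding branch_def by auto

lemma centre_not_in_branch: "m \<notin> branch m u"
  unfolding branch_def by auto

lemma neighbour_in_branch: "E m u \<Longrightarrow> u \<in> branch m u"
  unfolding branch_def using edge_in_V dist_edge edge_sym by fastforce

lemma in_some_branch:
  assumes "z \<in> V" "m \<in> V" "z \<noteq> m"
  obtains u where "E m u" "z \<in> branch m u"
proof -
  obtain p where p: "E m p" "d p z + 1 = d m z"
    using closer_neighbour assms by metis
  have "d z p = d p z" "d z m = d m z"
    using dist_commute edge_in_V(2)[OF p(1)] assms by auto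
  then show ?thesis
    using that p assms unfolding branch_def by auto
qed

lemma branches_disjoint:
  assumes "E m u" "E m w" "z \<in> branch m u" "z \<in> branch m w"
  shows "u = w"
  using unique_closer_neighbour[OF assms(1,2) branch_in_V[OF assms(3)]] assms(3,4)
  unfolding branch_def by auto

lemma dist_in_branch:
  assumes "E m u" "z \<in> branch m u"
  shows "d z m = d z u + 1"
  using adjacent_dist_diff[OF edge_sym[OF assms(1)] branch_in_V[OF assms(2)]] assms(2)
  unfolding branch_def by auto

lemma dist_outside_branch:
  assumes "E m u" "z \<in> V" "z \<notin> branch m u"
  shows "d z u = d z m + 1"
  using adjacent_dist_diff[OF edge_sym[OF assms(1)] assms(2)] assms(2,3)
  unfolding branch_def by auto

lemma branch_closed:
  assumes "E a b" "a \<noteq> m" "b \<noteq> m" "E m u" "a \<in> branch m u"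
  shows "b \<in> branch m u"
proof -
  obtain u' where u': "E m u'" "b \<in> branch m u'"
    using in_some_branch[of b m] edge_in_V assms by metis
  have "d a m = d b m + 1 \<or> d b m = d a m + 1"
    using adjacent_dist_diff[OF assms(1) edge_in_V(1)[OF assms(4)]] dist_commute
      edge_in_V assms(1,4) by metis
  then show ?thesis
  proof
    assume closer: "d a m = d b m + 1"
    have "d a u' \<le> d a b + d b u'"
      using dist_triangle edge_in_V assms(1) u'(1) by metis
    then have "a \<in> branch m u'"
      using closer dist_in_branch[OF u'] dist_edge[OF assms(1)] edge_in_V(1)[OF assms(1)]
      unfolding branch_def by auto
    then show ?thesis
      using branches_disjoint[OF assms(4) u'(1) assms(5)] u'(2) by simp
  next
    assume farther: "d b m = d a m + 1"
    have "d b u \<le> d b a + d a u"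
      using dist_triangle edge_in_V assms(1,4) by metis
    then show ?thesis
      using farther dist_in_branch[OF assms(4,5)] dist_edge[OF edge_sym[OF assms(1)]]
        edge_in_V(2)[OF assms(1)] unfolding branch_def by auto
  qed
qed

lemma walk_in_branch:
  assumes "walk E ps" "m \<notin> set ps" "E m y" "hd ps \<in> branch m y"
  shows "set ps \<subseteq> branch m y"
  using assms
proof (induction ps rule: induct_list012)
  case (3 a b ps)
  have "b \<in> branch m y"
    using branch_closed[of a b m y] 3 by (auto simp: walk_iff_successively)
  then show ?case
    using 3 by (auto simp: walk_iff_successively)
qed auto

lemma dist_through_centre:
  assumes "E m u" "z \<in> branch m u" "s \<in> V" "s \<notin> branch m u"
  shows "d z s = d z m + d m s"
proof (cases "s = m")
  case True then show ?thesis by simp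
next
  case False
  have zV: "z \<in> V" using branch_in_V[OF assms(2)] .
  obtain P where P: "P 0 = s" "P (d s z) = z" "\<forall>i<d s z. E (P i) (P (Suc i))"
    "\<forall>i\<le>d s z. P i \<in> V \<and> d s (P i) = i \<and> d (P i) z = d s z - i"
    using geodesic[OF assms(3) zV] .
  have "\<exists>i\<le>d s z. P i = m"
  proof (rule ccontr)
    assume avoid: "\<not> ?thesis"
    have "P i \<notin> branch m u" if "i \<le> d s z" for i
      using that
    proof (induction i)
      case 0 then show ?case using P(1) assms(4) by simp
    next
      case (Suc i)
      have step: "E (P (Suc i)) (P i)" "P (Suc i) \<noteq> m" "P i \<noteq> m"
        using P(3) avoid Suc.prems edge_sym by auto
      show ?case
      proof
        assume "P (Suc i) \<in> branch m u"
        then have "P i \<in> branch m u"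
          using branch_closed[OF step assms(1)] by blast
        then show False using Suc by simp
      qed
    qed
    from this[of "d s z"] show False using P(2) assms(2) by simp
  qed
  then obtain i where "i \<le> d s z" "P i = m" by blast
  then have "d s z = d s m + d m z"
    using P(4) by force
  moreover have "d z s = d s z" "d z m = d m z" "d m s = d s m"
    using dist_commute zV assms(3) edge_in_V(1)[OF assms(1)] by auto
  ultimately show ?thesis by simp
qed

lemma branch_nested:
  assumes "E m u" "b \<in> branch m u" "E b x" "m \<notin> branch b x" "z \<in> branch b x"
  shows "z \<in> branch m u"
proof -
  have "d z m = d z b + d b m"
    using dist_through_centre[OF assms(3,5) edge_in_V(1)[OF assms(1)] assms(4)] .
  moreover have "d z u \<le> d z b + d b u"
    using dist_triangle branch_in_V assms(2,5) edge_in_V(2)[OF assms(1)] by metis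
  moreover have "d b u < d b m"
    using assms(2) unfolding branch_def by auto
  ultimately show ?thesis
    using branch_in_V[OF assms(5)] unfolding branch_def by auto
qed

section \<open>Resolving sets of trees\<close>

definition free_branches :: "'a set \<Rightarrow> 'a \<Rightarrow> 'a \<Rightarrow> 'a \<Rightarrow> bool" where
  "free_branches S m u w \<longleftrightarrow> E m u \<and> E m w \<and> u \<noteq> w \<and>
     (\<forall>s\<in>S. s \<notin> branch m u \<and> s \<notin> branch m w)"

lemma not_resolving_if_free_branches:
  assumes "free_branches S m u w" "S \<subseteq> V"
  shows "\<not> resolving_set V E S"
proof -
  have mu: "E m u" and mw: "E m w" and "u \<noteq> w"
    using assms unfolding free_branches_def by auto
  moreover have "d u s = d w s" if "s \<in> S" for s
  proof -
    have "d s u = d s m + 1" "d s w = d s m + 1"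
      using dist_outside_branch mu mw that assms unfolding free_branches_def by auto
    then show ?thesis
      using dist_commute edge_in_V mu mw that assms(2) by (metis subsetD)
  qed
  ultimately show ?thesis
    unfolding resolving_set_def using edge_in_V by metis
qed

lemma closer_within_branch:
  assumes "E m u" "E m w" "u \<noteq> w" "x \<in> branch m u" "y \<in> branch m w" "d x m = d y m"
    "s \<in> branch m u"
  shows "d x s < d y s"
proof -
  have V3: "x \<in> V" "s \<in> V" "u \<in> V" "m \<in> V"
    using branch_in_V assms(4,7) edge_in_V assms(1) by auto
  have "s \<notin> branch m w" using branches_disjoint assms(1-3,7) by blast
  then have "d y s = d y m + d m s" using dist_through_centre[OF assms(2,5)] V3 by blast
  moreover have "d x s \<le> d x u + d u s" using dist_triangle V3 by blast
  moreover have "d x m = d x u + 1" "d s m = d s u + 1"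
    using dist_in_branch assms(1,4,7) by auto
  moreover have "d u s = d s u" "d m s = d s m" using dist_commute V3 by auto
  ultimately show ?thesis using assms(6) by linarith
qed

text \<open>If \<open>S\<close> does not separate \<open>x\<close> and \<open>y\<close>, then \<open>d x y\<close> is even by parity; the middle
  vertex \<open>m\<close> of the path from \<open>x\<close> to \<open>y\<close> has two free branches, those towards \<open>x\<close> and \<open>y\<close>.\<close>

lemma free_branches_if_unresolved:
  assumes "S \<subseteq> V" "S \<noteq> {}" "x \<in> V" "y \<in> V" "x \<noteq> y" "\<forall>s\<in>S. d x s = d y s"
  obtains m u w where "free_branches S m u w"
proof -
  obtain s0 where s0: "s0 \<in> S" using assms by auto
  have "even (d x y)"
    using dist_parity[OF assms(3,4)] s0 assms(1,6) by fastforce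
  moreover have "d x y \<noteq> 0" using dist_eq_0_iff assms by auto
  ultimately obtain k where k: "d x y = 2 * k" "k \<ge> 1" by (auto elim!: evenE)
  obtain P where P: "P 0 = x" "P (d x y) = y" "\<forall>i<d x y. E (P i) (P (Suc i))"
     "\<forall>i\<le>d x y. P i \<in> V \<and> d x (P i) = i \<and> d (P i) y = d x y - i"
    using geodesic[OF assms(3,4)] .
  define m u w where "m = P k" and "u = P (k - 1)" and "w = P (k + 1)"
  have "E u m" using P(3)[rule_format, of "k - 1"] k unfolding m_def u_def by auto
  then have mu: "E m u" by (rule edge_sym)
  have mw: "E m w" using P(3) k unfolding m_def w_def by auto
  have V3: "m \<in> V" "u \<in> V" "w \<in> V" using edge_in_V mu mw by auto
  have dx: "d x u = k - 1" "d x m = k" "d x w = k + 1"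
    using P k unfolding m_def u_def w_def by auto
  have dy: "d y m = k" "d y w = k - 1"
    using P k dist_commute V3 assms(4) unfolding m_def w_def by auto
  have uw: "u \<noteq> w" using dx by auto
  have xu: "x \<in> branch m u" using dx k assms unfolding branch_def by auto
  have yw: "y \<in> branch m w" using dy k assms unfolding branch_def by auto
  have "s \<notin> branch m u \<and> s \<notin> branch m w" if "s \<in> S" for s
    using closer_within_branch[OF mu mw uw xu yw] closer_within_branch[OF mw mu _ yw xu]
      assms(6) that dx(2) dy(1) uw by fastforce
  then show ?thesis
    using that mu mw uw unfolding free_branches_def by blast
qed

lemma resolving_set_iff_no_free_branches:
  assumes "S \<subseteq> V" "S \<noteq> {}"
  shows "resolving_set V E S \<longleftrightarrow> (\<nexists>m u w. free_branches S m u w)"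
proof
  show "resolving_set V E S \<Longrightarrow> \<nexists>m u w. free_branches S m u w"
    using not_resolving_if_free_branches assms by blast
next
  assume "\<nexists>m u w. free_branches S m u w"
  then show "resolving_set V E S"
    using free_branches_if_unresolved[OF assms] assms(1) unfolding resolving_set_def by metis
qed

end

section \<open>Adjacency resolving sets\<close>

definition adj_level :: "('b \<Rightarrow> 'b \<Rightarrow> bool) \<Rightarrow> 'b \<Rightarrow> 'b \<Rightarrow> nat" where
  "adj_level F i t = (if i = t then 0 else if F i t then 1 else 2)"

context tree_graph
begin

lemma adist_eq_adj_level:
  assumes "x \<in> V" "y \<in> V"
  shows "adist E x y = adj_level E x y"
proof -
  have "d x y \<ge> 2" if "x \<noteq> y" "\<not> E x y"
    using that dist_eq_0_iff[OF assms] dist_eq_1_iff[OF assms] by linarith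
  then show ?thesis
    unfolding adist_def adj_level_def using dist_edge by auto
qed

lemma adist_eq_2_iff: "adist E x y = 2 \<longleftrightarrow> d x y \<ge> 2"
  unfolding adist_def by auto

lemma adj_resolving_imp_resolving: "adj_resolving_set V E A \<Longrightarrow> resolving_set V E A"
  unfolding adj_resolving_set_def resolving_set_def adist_def by metis

lemma far_vertex_unique:
  assumes "adj_resolving_set V E A" "x \<in> V" "y \<in> V"
    "\<forall>s\<in>A. adist E x s = 2" "\<forall>s\<in>A. adist E y s = 2"
  shows "x = y"
  using assms unfolding adj_resolving_set_def by metis

lemma card_V_le_3_if_adj_resolving_singleton:
  assumes "adj_resolving_set V E A" "A \<subseteq> {a}"
  shows "card V \<le> 3"
proof -
  have "inj_on (\<lambda>v. adist E v a) V"
    using assms unfolding adj_resolving_set_def inj_on_def by blast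
  then have "card V = card ((\<lambda>v. adist E v a) ` V)"
    by (simp add: card_image)
  also have "\<dots> \<le> card {0::nat, 1, 2}"
    by (rule card_mono) (auto simp: adist_def)
  finally show ?thesis by simp
qed

definition branching :: "'a \<Rightarrow> bool" where
  "branching v \<longleftrightarrow> (\<exists>n1 n2 n3. E v n1 \<and> E v n2 \<and> E v n3 \<and> n1 \<noteq> n2 \<and> n1 \<noteq> n3 \<and> n2 \<noteq> n3)"

lemma not_resolving_if_in_one_branch:
  assumes "branching v" "E v y" "A \<subseteq> insert v (branch v y)"
  shows "\<not> resolving_set V E A"
proof -
  obtain n1 n2 n3 where n: "E v n1" "E v n2" "E v n3" "n1 \<noteq> n2" "n1 \<noteq> n3" "n2 \<noteq> n3"
    using assms(1) unfolding branching_def by blast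
  then obtain y1 y2 where y: "y1 \<in> {n1, n2, n3}" "y2 \<in> {n1, n2, n3}" "y1 \<noteq> y2" "y1 \<noteq> y" "y2 \<noteq> y"
    by (metis insertCI)
  have "s \<notin> branch v y1 \<and> s \<notin> branch v y2" if "s \<in> A" for s
  proof (cases "s = v")
    case True then show ?thesis using centre_not_in_branch by simp
  next
    case False
    then have "s \<in> branch v y" using that assms(3) by blast
    then show ?thesis
      using branches_disjoint[OF assms(2)] y n by blast
  qed
  then have "free_branches A v y1 y2"
    unfolding free_branches_def using y n by blast
  moreover have "A \<subseteq> V"
    using assms(3) branch_in_V edge_in_V(1)[OF assms(2)] by blast
  ultimately show ?thesis
    using not_resolving_if_free_branches by blast
qed

lemma not_resolving_if_on_path:
  assumes "branching v" "walk E ps" "hd ps \<in> V" "v \<notin> set (tl ps)" "A \<subseteq> set ps"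
  shows "\<not> resolving_set V E A"
proof -
  obtain p qs where ps: "ps = p # qs"
    using assms(2) unfolding walk_def by (cases ps) auto
  obtain n where vn: "E v n"
    using assms(1) unfolding branching_def by blast
  have "\<exists>y. E v y \<and> A \<subseteq> insert v (branch v y)"
  proof (cases "v = p")
    case True
    show ?thesis
    proof (cases qs)
      case Nil then show ?thesis using vn assms(5) ps True by auto
    next
      case (Cons q qs')
      then have "E v q" "walk E qs"
        using assms(2) ps True by (auto simp: walk_iff_successively)
      then have "set qs \<subseteq> branch v q"
        using walk_in_branch[of qs v q] neighbour_in_branch[of v q] assms(4) ps Cons by simp
      then show ?thesis
        using \<open>E v q\<close> assms(5) ps True by (intro exI[of _ q]) auto
    qed
  next
    case False
    have "p \<in> V" using assms(3) ps by simp
    then obtain y where "E v y" "p \<in> branch v y"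
      using in_some_branch[of p v] edge_in_V(1)[OF vn] False by blast
    then have "set ps \<subseteq> branch v y"
      using walk_in_branch[of ps v y] assms(2,4) ps False by simp
    then show ?thesis
      using \<open>E v y\<close> assms(5) by (intro exI[of _ y]) auto
  qed
  then show ?thesis
    using not_resolving_if_in_one_branch[OF assms(1)] by blast
qed

lemma not_resolving_if_within_short_path:
  assumes "branching v" "A \<subseteq> {a, b}" "a \<in> V" "a \<noteq> b" "E a b \<or> (\<exists>u. E a u \<and> E u b \<and> u \<noteq> v)"
  shows "\<not> resolving_set V E A"
proof
  assume "resolving_set V E A"
  then have fails: False if "walk E ps" "hd ps \<in> V" "v \<notin> set (tl ps)" "A \<subseteq> set ps" for ps
    using not_resolving_if_on_path[OF assms(1) that] by blast
  consider "E a b" | u where "E a u" "E u b" "u \<noteq> v" using assms(5) by blast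
  then show False
  proof cases
    case 1
    then have "E b a" "b \<in> V" using edge_sym edge_in_V by auto
    then show False
      using fails[of "[a, b]"] fails[of "[b, a]"] 1 assms(2-4)
      by (cases "v = b") (auto simp: walk_iff_successively)
  next
    case 2
    then have "E b u" "E u a" "b \<in> V" using edge_sym edge_in_V by auto
    then show False
      using fails[of "[a, u, b]"] fails[of "[b, u, a]"] 2 assms(2-4)
      by (cases "v = b") (auto simp: walk_iff_successively)
  qed
qed

definition essential_at :: "'a set \<Rightarrow> 'a \<Rightarrow> 'a \<Rightarrow> 'a \<Rightarrow> 'a \<Rightarrow> bool" where
  "essential_at A a m u w \<longleftrightarrow> free_branches (A - {a}) m u w \<and> a \<in> branch m u"

lemma essential_atD:
  assumes "essential_at A a m u w"
  shows "E m u" "E m w" "u \<noteq> w" "a \<in> branch m u"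
    "\<And>s. s \<in> A \<Longrightarrow> s \<noteq> a \<Longrightarrow> s \<notin> branch m u"
    "\<And>s. s \<in> A \<Longrightarrow> s \<noteq> a \<Longrightarrow> s \<notin> branch m w"
  using assms unfolding essential_at_def free_branches_def by auto

lemma essential_at_if_removal_not_resolving:
  assumes "resolving_set V E A" "a \<in> A" "A - {a} \<noteq> {}" "\<not> resolving_set V E (A - {a})"
  obtains m u w where "essential_at A a m u w"
proof -
  have AV: "A - {a} \<subseteq> V" using assms(1) unfolding resolving_set_def by auto
  obtain m u w where free: "free_branches (A - {a}) m u w"
    using assms(3,4) resolving_set_iff_no_free_branches[OF AV] by blast
  have "a \<in> branch m u \<or> a \<in> branch m w"
  proof (rule ccontr)
    assume "\<not> ?thesis"
    then have "free_branches A m u w"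
      using free unfolding free_branches_def by blast
    then show False
      using not_resolving_if_free_branches assms(1) unfolding resolving_set_def by blast
  qed
  moreover have "free_branches (A - {a}) m w u"
    using free unfolding free_branches_def by blast
  ultimately show ?thesis
    using that free unfolding essential_at_def by blast
qed

lemma adist_across_centre:
  assumes "E m w" "z \<in> branch m w" "s \<in> V" "s \<notin> branch m w" "s \<noteq> m"
  shows "adist E z s = 2"
proof -
  have "d z s = d z m + d m s"
    using dist_through_centre[OF assms(1-4)] .
  moreover have "d m s \<noteq> 0" "d z m \<noteq> 0"
    using dist_eq_0_iff edge_in_V(1)[OF assms(1)] assms branch_in_V centre_not_in_branch
    by metis+
  ultimately show ?thesis
    unfolding adist_eq_2_iff by linarith
qed

section \<open>Equal dimensions force a subdivided star\<close>

definition subdivided_star_at :: "'a \<Rightarrow> bool" where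
  "subdivided_star_at c \<longleftrightarrow> (\<forall>v\<in>V. v = c \<or> E c v \<or> (\<exists>y. E c y \<and> E y v)) \<and>
     (\<forall>y t t'. E c y \<longrightarrow> E y t \<longrightarrow> E y t' \<longrightarrow> t \<noteq> c \<longrightarrow> t' \<noteq> c \<longrightarrow> t = t')"

lemma subdivided_star_outer_leaf:
  assumes "subdivided_star_at c" "E c y" "E y t" "t \<noteq> c" "E t n"
  shows "n = y"
proof -
  have cV: "c \<in> V" using edge_in_V(1)[OF assms(2)] .
  have "d c t = 2"
    using adjacent_dist_diff[OF assms(3) cV] dist_edge[OF assms(2)] dist_eq_0_iff[OF cV]
      edge_in_V(2)[OF assms(3)] assms(4) by auto
  moreover have "d c n \<le> 2"
  proof -
    have "n \<in> V" using edge_in_V(2)[OF assms(5)] .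
    then consider "n = c" | "E c n" | y' where "E c y'" "E y' n"
      using assms(1) unfolding subdivided_star_at_def by blast
    then show ?thesis
    proof cases
      case 3
      then show ?thesis
        using dist_via_neighbour[OF edge_sym[OF 3(2)] cV] dist_edge[OF 3(1)]
          dist_commute cV edge_in_V by (metis one_add_one add_le_cancel_left)
    qed (auto simp: dist_edge)
  qed
  ultimately have "d c n = 1"
    using adjacent_dist_diff[OF assms(5) cV] by auto
  then show ?thesis
    using unique_closer_neighbour[OF edge_sym[OF assms(3)] assms(5) cV]
      \<open>d c t = 2\<close> dist_edge[OF assms(2)] by auto
qed

end

locale essential_adj_resolving = tree_graph +
  fixes A :: "'a set"
  assumes adj_resolving: "adj_resolving_set V E A"
    and all_essential: "\<forall>a\<in>A. \<exists>m u w. essential_at A a m u w"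
begin

lemma resolving: "resolving_set V E A"
  using adj_resolving by (rule adj_resolving_imp_resolving)

lemma A_subset_V: "A \<subseteq> V"
  using adj_resolving unfolding adj_resolving_set_def by simp

lemma essential_partner_centre:
  assumes inside: "\<forall>m u w. essential_at A a m u w \<longrightarrow> m \<in> A"
    and a: "essential_at A a b u w" and b: "essential_at A b m' u' w'" "a \<in> A"
  shows "m' = a"
proof (rule ccontr)
  assume m'a: "m' \<noteq> a"
  note ea = essential_atD[OF a] and eb = essential_atD[OF b(1)]
  have ab: "a \<noteq> b" using ea(4) centre_not_in_branch by auto
  have a_out: "a \<notin> branch m' u'" "a \<notin> branch m' w'"
    using eb(5,6) b(2) ab by auto
  have m'_in: "m' \<in> branch b u"
    using branch_nested[OF eb(1,4) ea(1) _ ea(4)] a_out by blast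
  have m'A: "m' \<notin> A"
    using ea(5) m'_in m'a by blast
  obtain x where x: "E m' x" "a \<in> branch m' x"
    using in_some_branch[of a m'] A_subset_V b(2) edge_in_V(1)[OF eb(1)] m'a by blast
  have xw': "x \<noteq> w'" using x a_out by auto
  have b_out: "b \<notin> branch m' x"
    using branches_disjoint[OF eb(1) x(1) eb(4)] x(2) a_out by auto
  have "essential_at A a m' x w'"
    unfolding essential_at_def free_branches_def
  proof (intro conjI ballI)
    fix s assume s: "s \<in> A - {a}"
    show "s \<notin> branch m' x"
      using branch_nested[OF ea(1) m'_in x(1) b_out] ea(5) s by blast
    show "s \<notin> branch m' w'"
      using eb(6) s branches_disjoint[OF eb(1,2) eb(4)] eb(3) by (cases "s = b") auto
  qed (use x eb xw' in auto)
  then show False using inside m'A by blast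
qed

lemma essential_pair_covers:
  assumes "essential_at A a b u w" "essential_at A b a u' w'"
  shows "A \<subseteq> {a, b}"
proof
  fix s assume s: "s \<in> A"
  note ea = essential_atD[OF assms(1)] and eb = essential_atD[OF assms(2)]
  show "s \<in> {a, b}"
  proof (rule ccontr)
    assume sab: "s \<notin> {a, b}"
    obtain y where y: "E b y" "s \<in> branch b y"
      using in_some_branch[of s b] A_subset_V s edge_in_V(1)[OF ea(1)] sab by blast
    have "a \<notin> branch b y"
      using branches_disjoint[OF ea(1) y(1) ea(4)] ea(5) s sab y(2) by auto
    then have "s \<in> branch a u'"
      using branch_nested[OF eb(1,4) y(1) _ y(2)] by blast
    then show False using eb(5) s sab by auto
  qed
qed

text \<open>\<open>u\<close> and \<open>w\<close> are both adjacent to \<open>b\<close>, so \<open>a\<close> has to tell them apart, and \<open>w\<close> is far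
  from \<open>a\<close>.\<close>

lemma essential_pair_near:
  assumes "essential_at A a b u w" "A \<subseteq> {a, b}"
  shows "u = a \<or> E u a"
proof -
  note ea = essential_atD[OF assms(1)]
  have aV: "a \<in> V" and uV: "u \<in> V" and wV: "w \<in> V" and bV: "b \<in> V"
    using branch_in_V[OF ea(4)] edge_in_V ea(1,2) by auto
  have "a \<notin> branch b w"
    using branches_disjoint[OF ea(1,2) ea(4)] ea(3) by auto
  moreover have "a \<noteq> b" using ea(4) centre_not_in_branch by auto
  ultimately have "adist E w a = 2"
    using adist_across_centre[OF ea(2) neighbour_in_branch[OF ea(2)] aV] by simp
  moreover have "adist E u b = adist E w b"
    using adist_eq_adj_level[OF uV bV] adist_eq_adj_level[OF wV bV] ea(1,2) edge_sym edge_neq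
    unfolding adj_level_def by metis
  moreover obtain z where "z \<in> A" "adist E u z \<noteq> adist E w z"
    using adj_resolving uV wV ea(3) unfolding adj_resolving_set_def by blast
  ultimately have "adist E u a \<noteq> 2" using assms(2) by auto
  then show ?thesis
    using adist_eq_adj_level[OF uV aV] unfolding adj_level_def by (auto split: if_splits)
qed

text \<open>Near a vertex of degree at least 3, every element of \<open>A\<close> is essential at some centre
  outside \<open>A\<close>: otherwise \<open>A\<close> would consist of two elements on a short path, which cannot
  resolve the tree.\<close>

lemma essential_at_centre_outside:
  assumes "branching v" "a \<in> A"
  obtains m u w where "essential_at A a m u w" "m \<notin> A"
proof (rule ccontr)
  assume "\<not> thesis"
  then have inside: "\<forall>m u w. essential_at A a m u w \<longrightarrow> m \<in> A"
    using that by blast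
  obtain b u w where ab: "essential_at A a b u w"
    using all_essential assms(2) by blast
  have bA: "b \<in> A" using inside ab by blast
  obtain m' u' w' where "essential_at A b m' u' w'"
    using all_essential bA by blast
  then have "essential_at A b a u' w'"
    using essential_partner_centre[OF inside ab _ assms(2)] by metis
  then have A2: "A \<subseteq> {a, b}" using essential_pair_covers[OF ab] by blast
  note ea = essential_atD[OF ab]
  have aV: "a \<in> V" using assms(2) A_subset_V by auto
  have ab': "a \<noteq> b" using ea(4) centre_not_in_branch by auto
  consider "u = a" | "E a u" "E u b" "u \<noteq> v" | "E u a" "u \<noteq> a" "v = u"
    using essential_pair_near[OF ab A2] ea(1) edge_sym by blast
  then show False
  proof cases
    case 3
    obtain z where uz: "E u z" "z \<noteq> a" "z \<noteq> b"
      using assms(1) 3 unfolding branching_def by metis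
    have "essential_at A a u a z"
      unfolding essential_at_def free_branches_def
      using A2 3 uz neighbour_in_branch[of u a] neighbour_in_branch[of u b]
        branches_disjoint[of u a b] branches_disjoint[of u z b] edge_sym[OF ea(1)] ea(4)
        centre_not_in_branch by blast
    moreover have "u \<notin> A" using A2 3 edge_neq[OF ea(1)] by auto
    ultimately show False using inside by blast
  qed (use not_resolving_if_within_short_path[OF assms(1) A2 aV ab'] ea(1) edge_sym resolving
       in blast)+
qed

lemma essential_far_branch:
  assumes "essential_at A a m u w" "m \<notin> A"
  shows "\<forall>s\<in>A. adist E w s = 2" "branch m w = {w}" "\<forall>n. E w n \<longrightarrow> n = m"
proof -
  note ea = essential_atD[OF assms(1)]
  have far: "\<forall>s\<in>A. adist E z s = 2" if z: "z \<in> branch m w" for z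
  proof
    fix s assume s: "s \<in> A"
    have "s \<notin> branch m w"
      using ea(6) s branches_disjoint[OF ea(1,2) ea(4)] ea(3) by (cases "s = a") auto
    then show "adist E z s = 2"
      using adist_across_centre[OF ea(2) z] A_subset_V s assms(2) by auto
  qed
  then show "\<forall>s\<in>A. adist E w s = 2"
    using neighbour_in_branch[OF ea(2)] by blast
  show single: "branch m w = {w}"
    using far far_vertex_unique[OF adj_resolving] branch_in_V neighbour_in_branch[OF ea(2)]
    by blast
  show "\<forall>n. E w n \<longrightarrow> n = m"
  proof (intro allI impI)
    fix n assume wn: "E w n"
    show "n = m"
    proof (rule ccontr)
      assume "n \<noteq> m"
      then have "n \<in> branch m w"
        using branch_closed[OF wn _ _ ea(2) neighbour_in_branch[OF ea(2)]] edge_neq[OF ea(2)]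
        by blast
      then show False using single edge_neq[OF wn] by auto
    qed
  qed
qed

context
  fixes v c z0
  assumes branching_v: "branching v"
    and essential_centre: "\<exists>a\<in>A. \<exists>u. essential_at A a c u z0"
    and centre_outside: "c \<notin> A"
begin

lemma centre_leaf: "E c z0" "\<forall>n. E z0 n \<longrightarrow> n = c"
  and leaf_far: "\<forall>s\<in>A. adist E z0 s = 2"
  and leaf_branch: "branch c z0 = {z0}"
  using essential_centre essential_atD(2) essential_far_branch[OF _ centre_outside] by blast+

lemma leaf_not_in_A: "z0 \<notin> A"
  using leaf_far edge_in_V(2)[OF centre_leaf(1)] adist_eq_adj_level
  unfolding adj_level_def by fastforce

lemma essential_outside_at_centre:
  assumes "essential_at A a m u w" "m \<notin> A"
  shows "m = c" "w = z0"
proof -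
  have wV: "w \<in> V" using edge_in_V(2)[OF essential_atD(2)[OF assms(1)]] .
  show "w = z0"
    by (rule far_vertex_unique[OF adj_resolving wV edge_in_V(2)[OF centre_leaf(1)]
          essential_far_branch(1)[OF assms] leaf_far])
  moreover have "E w m" using edge_sym[OF essential_atD(2)[OF assms(1)]] .
  ultimately show "m = c"
    using centre_leaf(2) by simp
qed

lemma branch_guarded:
  assumes "E c y" "y \<noteq> z0"
  obtains a where "a \<in> A" "essential_at A a c y z0"
proof -
  have "\<exists>a\<in>A. a \<in> branch c y"
  proof (rule ccontr)
    assume "\<not> ?thesis"
    moreover have "s \<notin> branch c z0" if "s \<in> A" for s
      using leaf_branch leaf_not_in_A that by auto
    ultimately have "free_branches A c y z0"
      unfolding free_branches_def using assms centre_leaf(1) by blast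
    then show False
      using not_resolving_if_free_branches resolving A_subset_V by blast
  qed
  then obtain a where aA: "a \<in> A" and acy: "a \<in> branch c y" by blast
  obtain m u w where ess: "essential_at A a m u w" and mA: "m \<notin> A"
    using essential_at_centre_outside[OF branching_v aA] .
  have "m = c" "w = z0" using essential_outside_at_centre[OF ess mA] by simp_all
  moreover have "u = y"
    using branches_disjoint[OF _ assms(1)] essential_atD(1,4)[OF ess] acy \<open>m = c\<close> by blast
  ultimately have "essential_at A a c y z0" using ess by simp
  with aA show ?thesis by (rule that)
qed

text \<open>Within a branch at \<open>c\<close> other than that of \<open>z0\<close>, vertices are told apart by a single
  element \<open>a\<close> of \<open>A\<close>, at adjacency distance 0 or 1 (distance 2 is taken by \<open>z0\<close>).\<close>

lemma branch_at_most_two: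
  assumes "E c y" "y \<noteq> z0" "z \<in> branch c y" "z' \<in> branch c y" "z \<noteq> y" "z' \<noteq> y"
  shows "z = z'"
proof -
  obtain a where aA: "a \<in> A" and ess: "essential_at A a c y z0"
    using branch_guarded[OF assms(1,2)] .
  have aV: "a \<in> V" using aA A_subset_V by auto
  have others: "adist E x s = 2" if "x \<in> branch c y" "s \<in> A" "s \<noteq> a" for x s
  proof -
    have "s \<in> V" "s \<noteq> c" using that(2) A_subset_V centre_outside by auto
    then show ?thesis
      using adist_across_centre[OF assms(1) that(1)] essential_atD(5)[OF ess that(2,3)] by blast
  qed
  have near: "adist E x a \<noteq> 2" if x: "x \<in> branch c y" for x
  proof
    assume "adist E x a = 2"
    then have "\<forall>s\<in>A. adist E x s = 2"
      using others[OF x] by auto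
    then have "x = z0"
      using far_vertex_unique[OF adj_resolving branch_in_V[OF x] edge_in_V(2)[OF centre_leaf(1)]]
        leaf_far by blast
    then show False
      using branches_disjoint[OF assms(1) centre_leaf(1)] x leaf_branch assms(2) by auto
  qed
  have separated: "x1 = x2"
    if x12: "x1 \<in> branch c y" "x2 \<in> branch c y" "adist E x1 a = adist E x2 a" for x1 x2
  proof (rule ccontr)
    assume "x1 \<noteq> x2"
    then obtain s where "s \<in> A" "adist E x1 s \<noteq> adist E x2 s"
      using adj_resolving branch_in_V x12(1,2) unfolding adj_resolving_set_def by blast
    then show False
      using x12 others by (cases "s = a") auto
  qed
  have levels: "adist E x a \<in> {0, 1}" if "x \<in> branch c y" for x
    using near[OF that] adist_eq_adj_level[OF branch_in_V[OF that] aV]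
    unfolding adj_level_def by (auto split: if_splits)
  have yB: "y \<in> branch c y" using neighbour_in_branch[OF assms(1)] .
  have "adist E z a \<noteq> adist E y a" "adist E z' a \<noteq> adist E y a"
    using separated[OF assms(3) yB] separated[OF assms(4) yB] assms(5,6) by blast+
  then have "adist E z a = adist E z' a"
    using levels[OF assms(3)] levels[OF assms(4)] levels[OF yB] by auto
  then show ?thesis
    using separated[OF assms(3,4)] by blast
qed

lemma centre_subdivided_star: "subdivided_star_at c"
  unfolding subdivided_star_at_def
proof (intro conjI ballI allI impI)
  fix y t t' assume yt: "E c y" "E y t" "E y t'" "t \<noteq> c" "t' \<noteq> c"
  have "y \<noteq> z0" using centre_leaf(2) yt by auto
  moreover have "t \<in> branch c y" "t' \<in> branch c y"
    using branch_closed[OF _ _ _ yt(1) neighbour_in_branch[OF yt(1)]] edge_neq yt by blast+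
  ultimately show "t = t'"
    using branch_at_most_two[OF yt(1)] edge_neq yt(2,3) by blast
next
  fix x assume xV: "x \<in> V"
  have cV: "c \<in> V" using edge_in_V(1)[OF centre_leaf(1)] .
  show "x = c \<or> E c x \<or> (\<exists>y. E c y \<and> E y x)"
  proof (rule ccontr)
    assume far: "\<not> ?thesis"
    then have "x \<noteq> c" by blast
    then obtain y where cy: "E c y" and xB: "x \<in> branch c y"
      using in_some_branch[OF xV cV] by blast
    have "y \<noteq> z0" using leaf_branch xB far centre_leaf(1) by auto
    obtain p where xp: "E x p" "d p c + 1 = d x c"
      using closer_neighbour[OF xV cV \<open>x \<noteq> c\<close>] by blast
    have "p \<noteq> c" using xp(1) far edge_sym by blast
    then have "p \<in> branch c y"
      using branch_closed[OF xp(1) _ _ cy xB] far by blast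
    moreover have "p \<noteq> y" using far cy xp(1) edge_sym by blast
    ultimately have "p = x"
      using branch_at_most_two[OF cy \<open>y \<noteq> z0\<close> _ xB] far cy by blast
    then show False using xp(1) no_loop by simp
  qed
qed

lemma branching_vertex_is_centre: "v = c"
proof (rule ccontr)
  assume vc: "v \<noteq> c"
  obtain n1 n2 n3 where n: "E v n1" "E v n2" "E v n3" "n1 \<noteq> n2" "n1 \<noteq> n3" "n2 \<noteq> n3"
    using branching_v unfolding branching_def by blast
  consider "E c v" | y where "E c y" "E y v"
    using centre_subdivided_star edge_in_V(1)[OF n(1)] vc
    unfolding subdivided_star_at_def by blast
  then show False
  proof cases
    case 1
    obtain p q where "p \<in> {n1, n2, n3}" "q \<in> {n1, n2, n3}" "p \<noteq> q" "p \<noteq> c" "q \<noteq> c"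
      using n(4-6) by (metis insertCI)
    then show False
      using centre_subdivided_star 1 n(1-3) unfolding subdivided_star_at_def by blast
  next
    case 2
    have "n1 = y" "n2 = y"
      using subdivided_star_outer_leaf[OF centre_subdivided_star 2 vc] n(1,2) by blast+
    then show False using n(4) by simp
  qed
qed

end

lemma subdivided_star_if_branching:
  assumes "branching v" "A \<noteq> {}"
  obtains c z0 where "branching c" "subdivided_star_at c" "E c z0" "\<forall>n. E z0 n \<longrightarrow> n = c"
proof -
  obtain a where "a \<in> A" using assms(2) by blast
  then obtain c u z0 where ess: "essential_at A a c u z0" and "c \<notin> A"
    using essential_at_centre_outside[OF assms(1)] by blast
  then have centre: "\<exists>a\<in>A. \<exists>u. essential_at A a c u z0" using \<open>a \<in> A\<close> by blast
  have "branching c"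
    using assms(1) branching_vertex_is_centre[OF assms(1) centre \<open>c \<notin> A\<close>] by simp
  then show ?thesis
    using that centre_leaf[OF assms(1) centre \<open>c \<notin> A\<close>]
      centre_subdivided_star[OF assms(1) centre \<open>c \<notin> A\<close>] by blast
qed

end

section \<open>Subdivided stars are spiders\<close>

lemma graph_iso_if_bij_betw:
  assumes "bij_betw h W V" "\<forall>i\<in>W. \<forall>j\<in>W. F i j \<longleftrightarrow> E (h i) (h j)"
  shows "graph_iso V E W F"
proof -
  have "bij_betw (inv_into W h) V W"
    using bij_betw_inv_into[OF assms(1)] .
  moreover have "E x y \<longleftrightarrow> F (inv_into W h x) (inv_into W h y)" if "x \<in> V" "y \<in> V" for x y
    using assms bij_betw_inv_into_right[OF assms(1)] bij_betwE[OF calculation] that by metis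
  ultimately show ?thesis
    unfolding graph_iso_def by blast
qed

lemma enumeration_with_prefix:
  assumes "finite N" "L \<subseteq> N"
  obtains e where "bij_betw e {1..card N} N" "e ` {1..card L} = L"
proof -
  have "finite L" using assms finite_subset by blast
  obtain e2 where e2: "bij_betw e2 {1..card L} L"
    using ex_bij_betw_nat_finite_1[OF \<open>finite L\<close>] by blast
  have "card (N - L) = card {card L + 1..card N}"
    using card_Diff_subset[OF \<open>finite L\<close> assms(2)] by simp
  then obtain e1 where e1: "bij_betw e1 {card L + 1..card N} (N - L)"
    using finite_same_card_bij[of "{card L + 1..card N}" "N - L"] assms(1) by auto
  have "card L \<le> card N" using card_mono[OF assms] .
  then have "{1..card L} \<union> {card L + 1..card N} = {1..card N}" by auto
  moreover have "L \<union> (N - L) = N" using assms(2) by auto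
  ultimately have "bij_betw (\<lambda>i. if i \<in> {1..card L} then e2 i else e1 i) {1..card N} N"
    using bij_betw_disjoint_Un[OF e2 e1] by force
  moreover have "(\<lambda>i. if i \<in> {1..card L} then e2 i else e1 i) ` {1..card L} = L"
    using e2 unfolding bij_betw_def by simp
  ultimately show ?thesis using that by blast
qed

lemma spider_E_iff:
  assumes "k < x" "i \<in> spider_V x k" "j \<in> spider_V x k"
  shows "spider_E x k i j \<longleftrightarrow> (i = 0 \<and> k < j) \<or> (j = 0 \<and> k < i) \<or>
    (1 \<le> j \<and> j \<le> k \<and> i = x + j) \<or> (1 \<le> i \<and> i \<le> k \<and> j = x + i)"
  using assms unfolding spider_E_def spider_E0_def spider_V_def by auto

context tree_graph
begin

definition long_legs :: "'a \<Rightarrow> 'a set" where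
  "long_legs c = {y. E c y \<and> (\<exists>t. E y t \<and> t \<noteq> c)}"

definition leg_end :: "'a \<Rightarrow> 'a \<Rightarrow> 'a" where
  "leg_end c y = (SOME t. E y t \<and> t \<noteq> c)"

text \<open>The long legs at \<open>c\<close> become the first \<open>k\<close> legs of the spider: the neighbour of \<open>c\<close> on
  leg \<open>i\<close> is vertex \<open>x + i\<close>, its outer end is vertex \<open>i\<close>.\<close>

definition spider_label :: "'a \<Rightarrow> (nat \<Rightarrow> 'a) \<Rightarrow> nat \<Rightarrow> nat \<Rightarrow> nat \<Rightarrow> 'a" where
  "spider_label c e x k i =
     (if i = 0 then c else if i \<le> k then leg_end c (e i) else if i \<le> x then e i else e (i - x))"

context
  fixes c assumes star: "subdivided_star_at c"
begin

lemma leg_end: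
  assumes "y \<in> long_legs c"
  shows "E y (leg_end c y)" "leg_end c y \<noteq> c"
  using someI_ex[of "\<lambda>t. E y t \<and> t \<noteq> c"] assms unfolding leg_end_def long_legs_def by auto

lemma leg_end_leaf:
  assumes "y \<in> long_legs c"
  shows "E (leg_end c y) n \<longleftrightarrow> n = y"
proof
  have "E c y" using assms unfolding long_legs_def by blast
  then show "E (leg_end c y) n \<Longrightarrow> n = y"
    using subdivided_star_outer_leaf[OF star _ leg_end[OF assms]] by blast
qed (use edge_sym leg_end(1)[OF assms] in simp)

lemma leg_end_not_neighbour:
  assumes "y \<in> long_legs c"
  shows "\<not> E c (leg_end c y)"
proof
  assume "E c (leg_end c y)"
  then have "c = y" using leg_end_leaf[OF assms] edge_sym by blast
  then show False using assms no_loop unfolding long_legs_def by blast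
qed

lemma leg_end_inj:
  assumes "y \<in> long_legs c" "y' \<in> long_legs c"
  shows "leg_end c y = leg_end c y' \<longleftrightarrow> y = y'"
proof
  assume "leg_end c y = leg_end c y'"
  then have "E (leg_end c y) y'" using leg_end_leaf[OF assms(2)] by simp
  then show "y = y'" using leg_end_leaf[OF assms(1)] by simp
qed simp

lemma leg_end_unique:
  assumes "E c y" "E y t" "t \<noteq> c"
  shows "y \<in> long_legs c" "t = leg_end c y"
proof -
  show yL: "y \<in> long_legs c" using assms unfolding long_legs_def by blast
  show "t = leg_end c y"
    using star assms leg_end[OF yL] unfolding subdivided_star_at_def by blast
qed

lemma subdivided_star_vertex_cases:
  assumes "v \<in> V"
  obtains "v = c" | "E c v" | y where "y \<in> long_legs c" "v = leg_end c y"
proof -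
  consider "v = c" | "E c v" | y where "E c y" "E y v" "v \<noteq> c"
    using assms star unfolding subdivided_star_at_def by blast
  then show ?thesis
  proof cases
    case 3
    then show ?thesis using that(3) leg_end_unique[OF 3] by blast
  qed (use that in blast)+
qed

lemma subdivided_star_edge_iff:
  "E u v \<longleftrightarrow> (u = c \<and> E c v) \<or> (v = c \<and> E c u) \<or>
     (u \<in> long_legs c \<and> v = leg_end c u) \<or> (v \<in> long_legs c \<and> u = leg_end c v)"
proof
  assume uv: "E u v"
  show "(u = c \<and> E c v) \<or> (v = c \<and> E c u) \<or>
     (u \<in> long_legs c \<and> v = leg_end c u) \<or> (v \<in> long_legs c \<and> u = leg_end c v)"
  proof (cases "u = c \<or> v = c")
    case True then show ?thesis using uv edge_sym by auto
  next
    case False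
    show ?thesis
    proof (cases rule: subdivided_star_vertex_cases[OF edge_in_V(1)[OF uv]])
      case 2 then show ?thesis using leg_end_unique uv False by blast
    next
      case (3 y)
      then have "v = y" using leg_end_leaf uv by blast
      then show ?thesis using 3 by simp
    qed (use False in simp)
  qed
qed (use leg_end edge_sym in auto)

context
  fixes e :: "nat \<Rightarrow> 'a" and x k :: nat
  assumes enum: "bij_betw e {1..x} {y. E c y}" "e ` {1..k} = long_legs c" and "k < x"
begin

lemma enum_neighbour: "i \<in> {1..x} \<Longrightarrow> E c (e i)"
  using bij_betwE[OF enum(1)] by blast

lemma enum_inj: "i \<in> {1..x} \<Longrightarrow> j \<in> {1..x} \<Longrightarrow> e i = e j \<longleftrightarrow> i = j"
  using enum(1) unfolding bij_betw_def inj_on_def by blast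

lemma enum_long_leg: "i \<in> {1..x} \<Longrightarrow> e i \<in> long_legs c \<longleftrightarrow> i \<le> k"
  using enum(2) enum_inj \<open>k < x\<close> by (smt (verit) atLeastAtMost_iff image_iff order.trans less_imp_le)

lemma spider_label_simps:
  "spider_label c e x k 0 = c"
  "i \<in> {1..k} \<Longrightarrow> spider_label c e x k i = leg_end c (e i)"
  "i \<in> {k<..x} \<Longrightarrow> spider_label c e x k i = e i"
  "i \<in> {x<..x + k} \<Longrightarrow> spider_label c e x k i = e (i - x)"
  unfolding spider_label_def using \<open>k < x\<close> by auto

lemma spider_V_cases:
  assumes "i \<in> spider_V x k"
  obtains "i = 0" | "i \<in> {1..k}" | "i \<in> {k<..x}" | "i \<in> {x<..x + k}"
  using assms unfolding spider_V_def by force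

lemma spider_label_kind:
  assumes "i \<in> spider_V x k"
  shows "spider_label c e x k i = c \<longleftrightarrow> i = 0"
    and "E c (spider_label c e x k i) \<longleftrightarrow> k < i"
    and "spider_label c e x k i \<in> long_legs c \<longleftrightarrow> x < i"
proof -
  have legs: "y \<in> long_legs c \<Longrightarrow> E c y" for y unfolding long_legs_def by blast
  have "(spider_label c e x k i = c \<longleftrightarrow> i = 0) \<and> (E c (spider_label c e x k i) \<longleftrightarrow> k < i) \<and>
    (spider_label c e x k i \<in> long_legs c \<longleftrightarrow> x < i)"
  proof (cases rule: spider_V_cases[OF assms])
    case 1
    then show ?thesis using spider_label_simps(1) legs no_loop by auto
  next
    case 2
    then have "e i \<in> long_legs c" using enum(2) by blast
    then show ?thesis
      using 2 spider_label_simps(2) leg_end[of "e i"] leg_end_not_neighbour legs \<open>k < x\<close> by auto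
  next
    case 3
    then have "E c (e i)" "e i \<notin> long_legs c" using enum_neighbour enum_long_leg by auto
    then show ?thesis using 3 spider_label_simps(3) no_loop by auto
  next
    case 4
    then have "i - x \<in> {1..k}" by auto
    then have "e (i - x) \<in> long_legs c" using enum(2) by blast
    then show ?thesis using 4 spider_label_simps(4) legs no_loop \<open>k < x\<close> by auto
  qed
  then show "spider_label c e x k i = c \<longleftrightarrow> i = 0"
    "E c (spider_label c e x k i) \<longleftrightarrow> k < i"
    "spider_label c e x k i \<in> long_legs c \<longleftrightarrow> x < i" by blast+
qed

lemma spider_label_leg_end:
  assumes "i \<in> {x<..x + k}"
  shows "leg_end c (spider_label c e x k i) = spider_label c e x k (i - x)"
proof -
  have "i - x \<in> {1..k}" using assms by auto
  then show ?thesis using spider_label_simps(2,4) assms by simp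
qed

lemma spider_label_inj: "inj_on (spider_label c e x k) (spider_V x k)"
proof (rule inj_onI)
  fix i j assume i: "i \<in> spider_V x k" and j: "j \<in> spider_V x k"
    and eq: "spider_label c e x k i = spider_label c e x k j"
  have same: "i = 0 \<longleftrightarrow> j = 0" "k < i \<longleftrightarrow> k < j" "x < i \<longleftrightarrow> x < j"
    using spider_label_kind[OF i] spider_label_kind[OF j] eq by simp_all
  show "i = j"
  proof (cases rule: spider_V_cases[OF i])
    case 2
    then have "j \<in> {1..k}" using j same unfolding spider_V_def by auto
    then show ?thesis
      using eq 2 spider_label_simps(2) leg_end_inj enum_long_leg enum_inj \<open>k < x\<close> by auto
  next
    case 3
    then have "j \<in> {k<..x}" using j same unfolding spider_V_def by auto
    then show ?thesis using eq 3 spider_label_simps(3) enum_inj by auto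
  next
    case 4
    then have j4: "j \<in> {x<..x + k}" using j same unfolding spider_V_def by auto
    then have "e (i - x) = e (j - x)" "i - x \<in> {1..x}" "j - x \<in> {1..x}"
      using eq 4 spider_label_simps(4) \<open>k < x\<close> by auto
    then show ?thesis using enum_inj 4 j4 by auto
  qed (use same in simp)
qed

lemma spider_label_in_V:
  assumes i: "i \<in> spider_V x k"
  shows "spider_label c e x k i \<in> V"
proof (cases "i = 0")
  case True
  have "1 \<in> {1..x}" using \<open>k < x\<close> by simp
  then have "c \<in> V" using edge_in_V(1)[OF enum_neighbour] by blast
  then show ?thesis using True spider_label_simps(1) by simp
next
  case False
  show ?thesis
  proof (cases "i \<le> k")
    case True
    then have "e i \<in> long_legs c" using enum(2) False by auto
    then show ?thesis
      using True False spider_label_simps(2) edge_in_V(2)[OF leg_end(1)] by simp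
  next
    case False
    then show ?thesis
      using spider_label_kind(2)[OF i] edge_in_V(2) by auto
  qed
qed

lemma spider_label_image: "spider_label c e x k ` spider_V x k = V"
proof
  show "spider_label c e x k ` spider_V x k \<subseteq> V"
    using spider_label_in_V by blast
  show "V \<subseteq> spider_label c e x k ` spider_V x k"
  proof
    fix v assume "v \<in> V"
    then show "v \<in> spider_label c e x k ` spider_V x k"
    proof (cases rule: subdivided_star_vertex_cases)
      case 1
      then have "v = spider_label c e x k 0" using spider_label_simps(1) by simp
      moreover have "0 \<in> spider_V x k" unfolding spider_V_def by simp
      ultimately show ?thesis by (rule image_eqI)
    next
      case 2
      then have "v \<in> e ` {1..x}" using enum(1) unfolding bij_betw_def by simp
      then obtain i where i: "i \<in> {1..x}" "v = e i" by blast
      show ?thesis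
      proof (cases "i \<le> k")
        case True
        then have "v = spider_label c e x k (x + i)" using i spider_label_simps(4) by auto
        moreover have "x + i \<in> spider_V x k" using i True unfolding spider_V_def by simp
        ultimately show ?thesis by (rule image_eqI)
      next
        case False
        then have "v = spider_label c e x k i" using i spider_label_simps(3) by auto
        moreover have "i \<in> spider_V x k" using i unfolding spider_V_def by simp
        ultimately show ?thesis by (rule image_eqI)
      qed
    next
      case (3 y)
      then have "y \<in> e ` {1..k}" using enum(2) by simp
      then obtain i where i: "i \<in> {1..k}" "y = e i" by blast
      then have "v = spider_label c e x k i" using 3 spider_label_simps(2) by simp
      moreover have "i \<in> spider_V x k" using i unfolding spider_V_def by simp
      ultimately show ?thesis by (rule image_eqI)
    qed
  qed
qed

lemma spider_label_edges:
  assumes i: "i \<in> spider_V x k" and j: "j \<in> spider_V x k"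
  shows "spider_E x k i j \<longleftrightarrow> E (spider_label c e x k i) (spider_label c e x k j)"
proof -
  have to_end: "spider_label c e x k b = leg_end c (spider_label c e x k a) \<longleftrightarrow> b = a - x"
    if "a \<in> spider_V x k" "b \<in> spider_V x k" "x < a" for a b
  proof -
    have "a - x \<in> spider_V x k" "a \<in> {x<..x + k}" using that unfolding spider_V_def by auto
    then show ?thesis
      using spider_label_leg_end inj_on_eq_iff[OF spider_label_inj that(2)] by auto
  qed
  let ?h = "spider_label c e x k"
  have arith: "(1 \<le> j \<and> j \<le> k \<and> i = x + j) \<longleftrightarrow> (x < i \<and> j = i - x)"
    "(1 \<le> i \<and> i \<le> k \<and> j = x + i) \<longleftrightarrow> (x < j \<and> i = j - x)"
    using i j unfolding spider_V_def by auto
  have "E (?h i) (?h j) \<longleftrightarrow> (?h i = c \<and> E c (?h j)) \<or> (?h j = c \<and> E c (?h i)) \<or>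
      (?h i \<in> long_legs c \<and> ?h j = leg_end c (?h i)) \<or> (?h j \<in> long_legs c \<and> ?h i = leg_end c (?h j))"
    by (rule subdivided_star_edge_iff)
  also have "\<dots> \<longleftrightarrow> (i = 0 \<and> k < j) \<or> (j = 0 \<and> k < i) \<or>
      (1 \<le> j \<and> j \<le> k \<and> i = x + j) \<or> (1 \<le> i \<and> i \<le> k \<and> j = x + i)"
    unfolding spider_label_kind[OF i] spider_label_kind[OF j] arith
    using to_end[OF i j] to_end[OF j i] by blast
  also have "\<dots> \<longleftrightarrow> spider_E x k i j"
    using spider_E_iff[OF \<open>k < x\<close> i j] by simp
  finally show ?thesis by simp
qed

end

end

lemma subdivided_star_iso_spider:
  assumes star: "subdivided_star_at c" and "branching c"
    and leaf: "E c z0" "\<forall>n. E z0 n \<longrightarrow> n = c"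
  obtains x k where "3 \<le> x" "k < x" "graph_iso V E (spider_V x k) (spider_E x k)"
proof -
  define x k where "x = card {y. E c y}" and "k = card (long_legs c)"
  have fin: "finite {y. E c y}"
    using finite_subset[OF _ finite_V] edge_in_V(2) by blast
  have sub: "long_legs c \<subseteq> {y. E c y}" unfolding long_legs_def by blast
  have "z0 \<notin> long_legs c" using leaf unfolding long_legs_def by blast
  then have "k < x"
    unfolding k_def x_def using psubset_card_mono[OF fin] sub leaf(1) by blast
  have "3 \<le> x"
  proof -
    obtain n1 n2 n3 where "{n1, n2, n3} \<subseteq> {y. E c y}" "card {n1, n2, n3} = 3"
      using \<open>branching c\<close> unfolding branching_def by auto
    then show ?thesis unfolding x_def using card_mono[OF fin] by metis
  qed
  obtain e where enum: "bij_betw e {1..x} {y. E c y}" "e ` {1..k} = long_legs c"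
    using enumeration_with_prefix[OF fin sub] unfolding x_def k_def by blast
  have "bij_betw (spider_label c e x k) (spider_V x k) V"
    unfolding bij_betw_def
    using spider_label_inj[OF star enum \<open>k < x\<close>] spider_label_image[OF star enum \<open>k < x\<close>] by blast
  then have "graph_iso V E (spider_V x k) (spider_E x k)"
    using graph_iso_if_bij_betw spider_label_edges[OF star enum \<open>k < x\<close>] by blast
  with \<open>3 \<le> x\<close> \<open>k < x\<close> show ?thesis by (rule that)
qed

section \<open>Dimensions of paths and spiders\<close>

lemma two_vertices:
  assumes "card V \<ge> 2"
  obtains x y where "x \<in> V" "y \<in> V" "x \<noteq> y"
proof -
  obtain z where z: "z \<in> V" using V_nonempty by auto
  have "\<not> V \<subseteq> {z}" using card_mono[of "{z}" V] assms by auto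
  then show ?thesis using that z by blast
qed

lemma resolving_set_V: "resolving_set V E V"
  unfolding resolving_set_def
proof (intro conjI ballI impI)
  fix x y assume "x \<in> V" "y \<in> V" "x \<noteq> y"
  then have "d x x \<noteq> d y x" using dist_eq_0_iff[of y x] by simp
  then show "\<exists>z\<in>V. d x z \<noteq> d y z" using \<open>x \<in> V\<close> by blast
qed simp

lemma adj_resolving_set_V: "adj_resolving_set V E V"
  unfolding adj_resolving_set_def
proof (intro conjI ballI impI)
  fix x y assume "x \<in> V" "y \<in> V" "x \<noteq> y"
  then have "adist E x x \<noteq> adist E y x" using dist_eq_0_iff[of y x] by (simp add: adist_def)
  then show "\<exists>z\<in>V. adist E x z \<noteq> adist E y z" using \<open>x \<in> V\<close> by blast
qed simp

lemma finite_resolving_cards: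
  "finite {card S | S. resolving_set V E S}" "finite {card A | A. adj_resolving_set V E A}"
proof -
  have "{card S | S. resolving_set V E S} \<subseteq> {0..card V}"
    "{card A | A. adj_resolving_set V E A} \<subseteq> {0..card V}"
    unfolding resolving_set_def adj_resolving_set_def using card_mono[OF finite_V] by auto
  then show "finite {card S | S. resolving_set V E S}" "finite {card A | A. adj_resolving_set V E A}"
    using finite_subset by blast+
qed

lemma metric_dim_le: "resolving_set V E S \<Longrightarrow> metric_dim V E \<le> card S"
  unfolding metric_dim_def using finite_resolving_cards(1) by (intro Min_le) auto

lemma adj_dim_le: "adj_resolving_set V E A \<Longrightarrow> adj_dim V E \<le> card A"
  unfolding adj_dim_def using finite_resolving_cards(2) by (intro Min_le) auto

lemma metric_basis_exists:
  obtains S where "resolving_set V E S" "card S = metric_dim V E"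
proof -
  have "metric_dim V E \<in> {card S | S. resolving_set V E S}"
    unfolding metric_dim_def using finite_resolving_cards(1) resolving_set_V by (intro Min_in) auto
  then show ?thesis using that by auto
qed

lemma adj_basis_exists:
  obtains A where "adj_resolving_set V E A" "card A = adj_dim V E"
proof -
  have "adj_dim V E \<in> {card A | A. adj_resolving_set V E A}"
    unfolding adj_dim_def using finite_resolving_cards(2) adj_resolving_set_V by (intro Min_in) auto
  then show ?thesis using that by auto
qed

lemma metric_dim_le_adj_dim: "metric_dim V E \<le> adj_dim V E"
  using adj_basis_exists metric_dim_le adj_resolving_imp_resolving by metis

lemma metric_dim_pos:
  assumes "card V \<ge> 2"
  shows "metric_dim V E \<ge> 1"
proof -
  obtain S where S: "resolving_set V E S" "card S = metric_dim V E"
    using metric_basis_exists .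
  obtain x y where "x \<in> V" "y \<in> V" "x \<noteq> y"
    using two_vertices[OF assms] .
  then have "S \<noteq> {}" using S(1) unfolding resolving_set_def by auto
  moreover have "finite S" using S(1) finite_V finite_subset unfolding resolving_set_def by auto
  ultimately have "card S \<ge> 1" by (simp add: Suc_le_eq card_gt_0_iff)
  then show ?thesis using S(2) by simp
qed

text \<open>At most one branch at \<open>c\<close> can be free of a resolving set, and distinct branches need
  distinct elements.\<close>

lemma degree_le_metric_dim: "card {y. E c y} \<le> metric_dim V E + 1"
proof -
  define N where "N = {y. E c y}"
  obtain S where S: "resolving_set V E S" "card S = metric_dim V E"
    using metric_basis_exists .
  have SV: "S \<subseteq> V" using S(1) unfolding resolving_set_def by simp
  have finS: "finite S" using finite_subset[OF SV finite_V] .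
  have finN: "finite N" unfolding N_def using finite_subset[OF _ finite_V] edge_in_V(2) by blast
  define I where "I = {y \<in> N. \<exists>s\<in>S. s \<in> branch c y}"
  have "\<forall>y\<in>N - I. \<forall>y'\<in>N - I. y = y'"
  proof (intro ballI, rule ccontr)
    fix y y' assume "y \<in> N - I" "y' \<in> N - I" "y \<noteq> y'"
    then have "free_branches S c y y'"
      unfolding free_branches_def I_def N_def by blast
    then show False using not_resolving_if_free_branches S(1) SV by blast
  qed
  then have "card (N - I) \<le> 1"
    using card_le_Suc0_iff_eq[of "N - I"] finN by simp
  moreover have "card I \<le> card S"
  proof -
    define guard where "guard y = (SOME s. s \<in> S \<and> s \<in> branch c y)" for y
    have guard: "guard y \<in> S" "guard y \<in> branch c y" if "y \<in> I" for y
      using someI_ex[of "\<lambda>s. s \<in> S \<and> s \<in> branch c y"] that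
      unfolding guard_def I_def by auto
    have "inj_on guard I"
    proof (rule inj_onI)
      fix y y' assume yI: "y \<in> I" "y' \<in> I" and "guard y = guard y'"
      then have "guard y \<in> branch c y" "guard y \<in> branch c y'"
        using guard(2) by metis+
      then show "y = y'"
        using branches_disjoint yI unfolding I_def N_def by blast
    qed
    then show ?thesis
      using card_inj_on_le[of guard I S] guard(1) finS by blast
  qed
  moreover have "card (N - I) = card N - card I" "card I \<le> card N"
    using card_Diff_subset[of I N] card_mono[of N I] finN finite_subset[of I N]
    unfolding I_def by auto
  ultimately show ?thesis unfolding N_def using S(2) by linarith
qed

lemma exists_leaf:
  assumes "card V \<ge> 2"
  obtains l p where "E l p" "\<forall>n. E l n \<longrightarrow> n = p"
proof -
  obtain z where zV: "z \<in> V" using V_nonempty by auto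
  define M where "M = Max (d z ` V)"
  have M: "d z v \<le> M" if "v \<in> V" for v
    unfolding M_def using finite_V that by auto
  have "M \<in> d z ` V"
    unfolding M_def using Max_in[of "d z ` V"] finite_V V_nonempty by blast
  then obtain l where lV: "l \<in> V" and dl: "d z l = M" by blast
  obtain w where "w \<in> V" "w \<noteq> z"
    using two_vertices[OF assms] zV by metis
  then have "d z w \<noteq> 0" using dist_eq_0_iff zV by simp
  then have "l \<noteq> z" using M[OF \<open>w \<in> V\<close>] dl by auto
  then obtain p where lp: "E l p" "d p z + 1 = d l z"
    using closer_neighbour[OF lV zV] by blast
  have zp: "z \<in> branch l p"
    using lp dist_commute[OF zV] edge_in_V(2)[OF lp(1)] lV zV unfolding branch_def by auto
  have "n = p" if ln: "E l n" for n
  proof -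
    have "d z n \<le> d z l" using M[OF edge_in_V(2)[OF ln]] dl by simp
    then have "z \<in> branch l n"
      using adjacent_dist_diff[OF edge_sym[OF ln] zV] zV unfolding branch_def by auto
    then show ?thesis using branches_disjoint[OF ln lp(1)] zp by blast
  qed
  then show ?thesis using that lp(1) by blast
qed

lemma leaf_resolving_if_no_branching:
  assumes "\<nexists>v. branching v" "E l p" "\<forall>n. E l n \<longrightarrow> n = p"
  shows "resolving_set V E {l}"
proof (rule ccontr)
  have lV: "l \<in> V" using edge_in_V(1)[OF assms(2)] .
  assume "\<not> resolving_set V E {l}"
  then obtain m u w where free: "free_branches {l} m u w"
    using resolving_set_iff_no_free_branches[of "{l}"] lV by blast
  then have mu: "E m u" and mw: "E m w" and "u \<noteq> w" "l \<notin> branch m u" "l \<notin> branch m w"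
    unfolding free_branches_def by auto
  then have "l \<noteq> m" using assms(2,3) by auto
  then obtain y where "E m y" "l \<in> branch m y"
    using in_some_branch[OF lV edge_in_V(1)[OF mu]] by blast
  moreover have "y \<noteq> u" "y \<noteq> w" using calculation(2) \<open>l \<notin> branch m u\<close> \<open>l \<notin> branch m w\<close> by auto
  ultimately have "branching m"
    unfolding branching_def using mu mw \<open>u \<noteq> w\<close> by blast
  then show False using assms(1) by blast
qed

lemma path_2_iso:
  assumes "card V = 2"
  shows "graph_iso V E (path_V 2) (path_E 2)"
proof -
  obtain a b where V: "V = {a, b}" and ab: "a \<noteq> b"
    using assms unfolding card_2_iff by blast
  have "a \<in> V" "b \<in> V" using V by auto
  then obtain p where "E a p" using closer_neighbour ab by blast
  then have eab: "E a b" using edge_in_V(2) edge_neq V by fastforce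
  define h where "h i = (if i = 0 then a else b)" for i :: nat
  have "{0..<2} = {0, 1::nat}" by auto
  then have "bij_betw h (path_V 2) V"
    unfolding bij_betw_def inj_on_def path_V_def h_def V using ab by auto
  moreover have "\<forall>i\<in>path_V 2. \<forall>j\<in>path_V 2. path_E 2 i j \<longleftrightarrow> E (h i) (h j)"
    unfolding h_def path_E_def path_V_def using eab edge_sym no_loop by auto
  ultimately show ?thesis using graph_iso_if_bij_betw by blast
qed

lemma path_3_iso:
  assumes "card V = 3"
  shows "graph_iso V E (path_V 3) (path_E 3)"
proof -
  have "card V \<ge> 2" using assms by simp
  then obtain l p where lp: "E l p" "\<forall>n. E l n \<longrightarrow> n = p"
    by (rule exists_leaf)
  have lV: "l \<in> V" and pV: "p \<in> V" and "l \<noteq> p" using edge_in_V edge_neq lp(1) by auto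
  have "card {l, p} \<le> 2" by (simp add: card_insert_if)
  then have "\<not> V \<subseteq> {l, p}" using card_mono[of "{l, p}" V] assms by auto
  then obtain v where vV: "v \<in> V" and "v \<noteq> l" "v \<noteq> p" by blast
  have V: "V = {l, p, v}"
    using card_subset_eq[OF finite_V, of "{l, p, v}"] assms lV pV vV \<open>l \<noteq> p\<close> \<open>v \<noteq> l\<close> \<open>v \<noteq> p\<close>
    by auto
  obtain q where vq: "E v q" using closer_neighbour[OF vV lV \<open>v \<noteq> l\<close>] by blast
  have "q \<in> V" "q \<noteq> v" "q \<noteq> l" using edge_in_V(2)[OF vq] edge_neq[OF vq] lp(2) edge_sym[OF vq] \<open>v \<noteq> p\<close>
    by auto
  then have vp: "E v p" using vq V by auto
  define h where "h i = (if i = 0 then l else if i = 1 then p else v)" for i :: nat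
  have "{0..<3} = {0, 1, 2::nat}" by auto
  then have "bij_betw h (path_V 3) V"
    unfolding bij_betw_def inj_on_def path_V_def h_def V
    using \<open>l \<noteq> p\<close> \<open>v \<noteq> l\<close> \<open>v \<noteq> p\<close> by auto
  moreover have "path_E 3 i j \<longleftrightarrow> E (h i) (h j)" if "i \<in> path_V 3" "j \<in> path_V 3" for i j
  proof -
    have "i = 0 \<or> i = 1 \<or> i = 2" "j = 0 \<or> j = 1 \<or> j = 2"
      using that unfolding path_V_def by auto
    moreover have "E p l" "E p v" "\<not> E l v" "\<not> E v l"
      using lp vp edge_sym \<open>v \<noteq> p\<close> by blast+
    ultimately show ?thesis
      unfolding h_def path_E_def using lp(1) vp no_loop by auto
  qed
  ultimately show ?thesis using graph_iso_if_bij_betw by blast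
qed

lemma adj_dim_le_of_iso:
  assumes iso: "graph_iso V E W F" and "finite B" "B \<subseteq> W"
    and separates: "\<forall>i\<in>W. \<forall>j\<in>W. i \<noteq> j \<longrightarrow> (\<exists>t\<in>B. adj_level F i t \<noteq> adj_level F j t)"
  shows "adj_dim V E \<le> card B"
proof -
  obtain f where f: "bij_betw f V W" and fE: "\<forall>x\<in>V. \<forall>y\<in>V. E x y \<longleftrightarrow> F (f x) (f y)"
    using iso unfolding graph_iso_def by blast
  let ?g = "inv_into V f"
  have gV: "?g t \<in> V" and fg: "f (?g t) = t" if "t \<in> W" for t
    using bij_betwE[OF bij_betw_inv_into[OF f]] bij_betw_inv_into_right[OF f] that by auto
  have f_inj: "f v = f v' \<longleftrightarrow> v = v'" if "v \<in> V" "v' \<in> V" for v v'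
    using f that unfolding bij_betw_def inj_on_def by blast
  have adist_f: "adist E v z = adj_level F (f v) (f z)" if "v \<in> V" "z \<in> V" for v z
    using adist_eq_adj_level[OF that] f_inj[OF that] fE that unfolding adj_level_def by simp
  have "adj_resolving_set V E (?g ` B)"
    unfolding adj_resolving_set_def
  proof (intro conjI ballI impI)
    show "?g ` B \<subseteq> V" using gV assms(3) by auto
  next
    fix v v' assume v: "v \<in> V" and v': "v' \<in> V" and "v \<noteq> v'"
    then have "f v \<noteq> f v'" using f_inj by blast
    then obtain t where t: "t \<in> B" "adj_level F (f v) t \<noteq> adj_level F (f v') t"
      using separates bij_betwE[OF f] v v' by blast
    then have "adist E v (?g t) \<noteq> adist E v' (?g t)"
      using adist_f[OF v gV] adist_f[OF v' gV] fg assms(3) by auto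
    then show "\<exists>z\<in>?g ` B. adist E v z \<noteq> adist E v' z" using t by blast
  qed
  then have "adj_dim V E \<le> card (?g ` B)" by (rule adj_dim_le)
  also have "\<dots> \<le> card B" using card_image_le[OF assms(2)] .
  finally show ?thesis .
qed

lemma metric_dim_spider:
  assumes iso: "graph_iso V E (spider_V x k) (spider_E x k)" and "k < x"
  shows "x - 1 \<le> metric_dim V E"
proof -
  obtain f where f: "bij_betw f V (spider_V x k)"
    and fE: "\<forall>u\<in>V. \<forall>v\<in>V. E u v \<longleftrightarrow> spider_E x k (f u) (f v)"
    using iso unfolding graph_iso_def by blast
  let ?g = "inv_into V f"
  define c where "c = ?g 0"
  have g: "?g t \<in> V" "f (?g t) = t" if "t \<in> spider_V x k" for t
    using bij_betwE[OF bij_betw_inv_into[OF f]] bij_betw_inv_into_right[OF f] that by auto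
  have "?g ` {k<..x + k} \<subseteq> {y. E c y}"
  proof
    fix y assume "y \<in> ?g ` {k<..x + k}"
    then obtain t where t: "t \<in> {k<..x + k}" "y = ?g t" by blast
    then have "t \<in> spider_V x k" "0 \<in> spider_V x k" unfolding spider_V_def by auto
    moreover have "spider_E x k 0 t"
      using t(1) unfolding spider_E_def spider_E0_def by auto
    ultimately show "y \<in> {y. E c y}"
      using fE g t(2) unfolding c_def by auto
  qed
  moreover have "{k<..x + k} \<subseteq> f ` V"
    using bij_betw_imp_surj_on[OF f] unfolding spider_V_def by auto
  then have "inj_on ?g {k<..x + k}"
    by (rule inj_on_inv_into)
  moreover have "finite {y. E c y}"
    using finite_subset[OF _ finite_V] edge_in_V(2) by blast
  ultimately have "x \<le> card {y. E c y}"
    using card_inj_on_le[of ?g "{k<..x + k}"] by auto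
  then show ?thesis
    using degree_le_metric_dim[of c] by linarith
qed

end

text \<open>The unsubdivided leaves other than \<open>x\<close>, and the subdivision vertices.\<close>

definition spider_landmarks :: "nat \<Rightarrow> nat \<Rightarrow> nat set" where
  "spider_landmarks x k = {k<..<x} \<union> {x<..x + k}"

lemma card_spider_landmarks: "k < x \<Longrightarrow> card (spider_landmarks x k) = x - 1"
  unfolding spider_landmarks_def by (subst card_Un_disjoint) auto

lemma spider_landmarks_subset: "spider_landmarks x k \<subseteq> spider_V x k"
  unfolding spider_landmarks_def spider_V_def by auto

text \<open>Vertices outside the landmarks are told apart by which landmarks they are adjacent to:
  all of them (the centre), none (leaf \<open>x\<close>), or only \<open>x + p\<close> (leaf \<open>p \<le> k\<close>).\<close>

lemma spider_landmarks_separate: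
  assumes "3 \<le> x" "k < x" "i \<in> spider_V x k" "j \<in> spider_V x k" "i \<noteq> j"
  shows "\<exists>t\<in>spider_landmarks x k. adj_level (spider_E x k) i t \<noteq> adj_level (spider_E x k) j t"
proof -
  define B where "B = spider_landmarks x k"
  define nbrs where "nbrs u = {t \<in> B. spider_E x k u t}" for u
  have level: "adj_level (spider_E x k) u t = (if t \<in> nbrs u then 1 else 2)"
    if "u \<notin> B" "t \<in> B" for u t
    using that unfolding adj_level_def nbrs_def by auto
  consider "i \<in> B" | "j \<in> B" | "i \<notin> B" "j \<notin> B" by blast
  then show ?thesis
  proof cases
    case 1 then show ?thesis using assms(5) unfolding B_def adj_level_def by (intro bexI[of _ i]) auto
  next
    case 2 then show ?thesis using assms(5) unfolding B_def adj_level_def by (intro bexI[of _ j]) auto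
  next
    case 3
    have outside: "u = 0 \<or> u = x \<or> (1 \<le> u \<and> u \<le> k)" if "u \<in> spider_V x k" "u \<notin> B" for u
      using that unfolding B_def spider_landmarks_def spider_V_def by auto
    have nbrs_cases: "nbrs 0 = B" "nbrs x = {}" "1 \<le> p \<Longrightarrow> p \<le> k \<Longrightarrow> nbrs p = {x + p}" for p
      unfolding nbrs_def B_def spider_landmarks_def spider_E_def spider_E0_def using assms(2) by auto
    have "card B = x - 1" using card_spider_landmarks[OF assms(2)] unfolding B_def .
    then have big: "B \<noteq> {}" "B \<noteq> {y}" "{y} \<noteq> B" for y using assms(1) by auto
    have "nbrs i \<noteq> nbrs j"
      using outside[OF assms(3) 3(1)] outside[OF assms(4) 3(2)] nbrs_cases big assms(5)
      by (elim disjE; simp)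
    then obtain t where "t \<in> B" "t \<in> nbrs i \<longleftrightarrow> t \<notin> nbrs j"
      unfolding nbrs_def by blast
    then show ?thesis
      using level 3 unfolding B_def by (intro bexI[of _ t]) auto
  qed
qed

lemma adj_level_path_0:
  "i \<in> path_V n \<Longrightarrow> j \<in> path_V n \<Longrightarrow> n \<le> 3 \<Longrightarrow> i \<noteq> j \<Longrightarrow>
    adj_level (path_E n) i 0 \<noteq> adj_level (path_E n) j 0"
  unfolding path_V_def path_E_def adj_level_def by auto

context tree_graph
begin

lemma card_V_ge_4_if_branching:
  assumes "branching v"
  shows "card V \<ge> 4"
proof -
  obtain n1 n2 n3 where n: "E v n1" "E v n2" "E v n3" "n1 \<noteq> n2" "n1 \<noteq> n3" "n2 \<noteq> n3"
    using assms unfolding branching_def by blast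
  then have "card {v, n1, n2, n3} = 4" using edge_neq by auto
  moreover have "{v, n1, n2, n3} \<subseteq> V" using edge_in_V n by auto
  ultimately show ?thesis using card_mono[OF finite_V] by metis
qed

lemma essential_if_dims_equal:
  assumes "metric_dim V E = adj_dim V E" "adj_resolving_set V E A" "card A = adj_dim V E"
    "card V \<ge> 4" "a \<in> A"
  obtains m u w where "essential_at A a m u w"
proof -
  have finA: "finite A"
    using assms(2) finite_subset[OF _ finite_V] unfolding adj_resolving_set_def by blast
  have "\<not> resolving_set V E (A - {a})"
  proof
    assume "resolving_set V E (A - {a})"
    then have "metric_dim V E \<le> card (A - {a})" by (rule metric_dim_le)
    also have "\<dots> < card A" using card_Diff1_less[OF finA assms(5)] .
    finally show False using assms(1,3) by simp
  qed
  moreover have "A - {a} \<noteq> {}"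
    using card_V_le_3_if_adj_resolving_singleton[OF assms(2), of a] assms(4) by auto
  ultimately show ?thesis
    using essential_at_if_removal_not_resolving[OF adj_resolving_imp_resolving[OF assms(2)] assms(5)]
      that by blast
qed

lemma path_or_spider_if_dims_equal:
  assumes "card V \<ge> 2" "metric_dim V E = adj_dim V E"
  shows "graph_iso V E (path_V 2) (path_E 2) \<or> graph_iso V E (path_V 3) (path_E 3) \<or>
    (\<exists>x k::nat. x \<ge> 3 \<and> k \<le> x - 1 \<and> graph_iso V E (spider_V x k) (spider_E x k))"
proof (cases "\<exists>v. branching v")
  case True
  then obtain v where v: "branching v" by blast
  obtain A where A: "adj_resolving_set V E A" "card A = adj_dim V E"
    using adj_basis_exists .
  have "card V \<ge> 4" using card_V_ge_4_if_branching[OF v] .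
  then interpret essential_adj_resolving V E A
    using essential_if_dims_equal[OF assms(2) A] A(1) by unfold_locales metis+
  have "A \<noteq> {}" using card_V_le_3_if_adj_resolving_singleton[OF A(1)] \<open>card V \<ge> 4\<close> by auto
  then obtain c z0 where "branching c" "subdivided_star_at c" "E c z0" "\<forall>n. E z0 n \<longrightarrow> n = c"
    using subdivided_star_if_branching[OF v] by blast
  then obtain x k where "3 \<le> x" "k < x" "graph_iso V E (spider_V x k) (spider_E x k)"
    using subdivided_star_iso_spider by blast
  then show ?thesis by auto
next
  case False
  have "card V \<le> 3"
  proof (rule ccontr)
    assume "\<not> card V \<le> 3"
    obtain l p where l: "E l p" "\<forall>n. E l n \<longrightarrow> n = p"
      using exists_leaf[OF assms(1)] .
    have "metric_dim V E \<le> 1"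
      using metric_dim_le[OF leaf_resolving_if_no_branching[OF False l]] by simp
    moreover obtain A where A: "adj_resolving_set V E A" "card A = adj_dim V E"
      using adj_basis_exists .
    moreover have "finite A"
      using A(1) finite_subset[OF _ finite_V] unfolding adj_resolving_set_def by blast
    then have "card A \<ge> 2"
      using card_V_le_3_if_adj_resolving_singleton[OF A(1)] \<open>\<not> card V \<le> 3\<close>
      by (metis card_le_Suc0_iff_eq insertI1 not_less_eq_eq numeral_2_eq_2 subsetI)
    ultimately show False using assms(2) by simp
  qed
  then have "card V = 2 \<or> card V = 3" using assms(1) by auto
  then show ?thesis using path_2_iso path_3_iso by blast
qed

lemma dims_equal_if_path_or_spider:
  assumes "card V \<ge> 2"
    and "graph_iso V E (path_V 2) (path_E 2) \<or> graph_iso V E (path_V 3) (path_E 3) \<or>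
      (\<exists>x k::nat. x \<ge> 3 \<and> k \<le> x - 1 \<and> graph_iso V E (spider_V x k) (spider_E x k))"
  shows "metric_dim V E = adj_dim V E"
proof -
  have "adj_dim V E \<le> metric_dim V E"
    using assms(2)
  proof (elim disjE exE conjE)
    assume iso: "graph_iso V E (path_V 2) (path_E 2)"
    have "adj_dim V E \<le> card {0::nat}"
      by (rule adj_dim_le_of_iso[OF iso]) (use adj_level_path_0 in \<open>auto simp: path_V_def\<close>)
    then show ?thesis using metric_dim_pos[OF assms(1)] by simp
  next
    assume iso: "graph_iso V E (path_V 3) (path_E 3)"
    have "adj_dim V E \<le> card {0::nat}"
      by (rule adj_dim_le_of_iso[OF iso]) (use adj_level_path_0 in \<open>auto simp: path_V_def\<close>)
    then show ?thesis using metric_dim_pos[OF assms(1)] by simp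
  next
    fix x k :: nat
    assume "3 \<le> x" "k \<le> x - 1" and iso: "graph_iso V E (spider_V x k) (spider_E x k)"
    then have "k < x" by simp
    have "adj_dim V E \<le> card (spider_landmarks x k)"
      using adj_dim_le_of_iso[OF iso _ spider_landmarks_subset] spider_landmarks_separate
        \<open>3 \<le> x\<close> \<open>k < x\<close> unfolding spider_landmarks_def by blast
    then show ?thesis
      using card_spider_landmarks[OF \<open>k < x\<close>] metric_dim_spider[OF iso \<open>k < x\<close>] by simp
  qed
  then show ?thesis using metric_dim_le_adj_dim by simp
qed

end

theorem corollary5p11:
  fixes V :: "'a set" and E :: "'a \<Rightarrow> 'a \<Rightarrow> bool"
  assumes "tree V E" and "card V \<ge> 2"
  shows "metric_dim V E = adj_dim V E \<longleftrightarrow>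
    (graph_iso V E (path_V 2) (path_E 2) \<or> graph_iso V E (path_V 3) (path_E 3) \<or>
     (\<exists>x k::nat. x \<ge> 3 \<and> k \<le> x - 1 \<and> graph_iso V E (spider_V x k) (spider_E x k)))"
proof -
  interpret tree_graph V E using assms(1) by unfold_locales
  show ?thesis
    using path_or_spider_if_dims_equal dims_equal_if_path_or_spider assms(2) by blast
qed

end
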